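(* For each $1\leq p < \infty$, $B^{p}$ contains an isometric and complemented copy of $\ell^{p}(\mathfrak c,L^{p}[0,1])$.
   Context: Let $\mathcal{B}$ be the Borel $\sigma$-algebra of $\mathbb{R}$, $\lambda$ the Lebesgue measure, and $\mathcal{B}_{\infty}$ the $\sigma$-algebra on $\mathbb{R}^{\mathbb{N}}$ generated by the cylinder sets $\prod_{i=1}^{m}C_{i}\times\prod_{i=m+1}^{\infty}\mathbb{R}$ with $C_i\in\mathcal{B}$, $m\in\mathbb{N}$. Let $\mathcal{F}(\mathcal{B},\lambda)$ be the set of finite rectangles $\prod_{i\in\mathbb{N}}C_{i}$ with $C_i\in\mathcal{B}$ and $\prod_{i}\lambda(C_i)\in[0,\infty)$, with $\mathrm{vol}(\prod_{i}C_i):=\prod_i\lambda(C_i)$. The measure $\mu$ is the restriction to $\mathcal{B}_{\infty}$ of the outer measure $\mu^{\ast}(A):=\inf\{\sum_{n}\mathrm{vol}(\mathscr{C}_{n}) : \mathscr{C}_{n}\in\mathcal{F}(\mathcal{B},\lambda),\ A\subset\bigcup_{n}\mathscr{C}_{n}\}$ ($\inf\varnothing=\infty$). Let $I:=\mathbb{Z}^{\mathbb{N}}$ and, for $\mathfrak{a}=(a_n)\in I$, $\mathcal{C}_{\mathfrak{a}}:=\prod_{n\in\mathbb{N}}[a_{n},a_{n}+1)$. Define $B^{p}:=\{f\in L^{p}(\mu) : \int_{\mathcal{C}_{\mathfrak{a}}}|f|^{p}\,d\mu=0 \text{ for each } \mathfrak{a}\in I\}$, a closed subspace of $L^p(\mu)$.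 $\ell^{p}(\kappa,X)$ denotes the $\ell^p$-sum of $\kappa$ copies of the Banach space $X$, and $\mathfrak{c}$ is the cardinality of the continuum. *)

theory Defs
  imports "HOL-Analysis.Analysis"
begin

definition cylinders :: "(nat \<Rightarrow> real) set set" where
  "cylinders = {Pi UNIV C | C m. (\<forall>i<m. C i \<in> sets borel) \<and> (\<forall>i\<ge>m. C i = UNIV)}"

definition B_inf :: "(nat \<Rightarrow> real) set set" where
  "B_inf = sigma_sets UNIV cylinders"

definition finite_rect :: "(nat \<Rightarrow> real set) \<Rightarrow> bool" where
  "finite_rect C \<longleftrightarrow> (\<forall>i. C i \<in> sets borel) \<and>
     (\<exists>v. v < \<infinity> \<and> ((\<lambda>n. \<Prod>i<n. emeasure lborel (C i)) \<longlongrightarrow> v) sequentially)"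

definition vol :: "(nat \<Rightarrow> real set) \<Rightarrow> ennreal" where
  "vol C = lim (\<lambda>n. \<Prod>i<n. emeasure lborel (C i))"

definition mu_star :: "(nat \<Rightarrow> real) set \<Rightarrow> ennreal" where
  "mu_star A = (INF R \<in> {R :: nat \<Rightarrow> nat \<Rightarrow> real set.
        (\<forall>n. finite_rect (R n)) \<and> A \<subseteq> (\<Union>n. Pi UNIV (R n))}. (\<Sum>n. vol (R n)))"

definition mu :: "(nat \<Rightarrow> real) measure" where
  "mu = measure_of UNIV B_inf mu_star"

definition memLp :: "'a measure \<Rightarrow> real \<Rightarrow> ('a \<Rightarrow> real) \<Rightarrow> bool" where
  "memLp M p f \<longleftrightarrow> f \<in> borel_measurable M \<and> (\<integral>\<^sup>+ x. ennreal (\<bar>f x\<bar> powr p) \<partial>M) < \<infinity>"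

definition Lp_norm :: "'a measure \<Rightarrow> real \<Rightarrow> ('a \<Rightarrow> real) \<Rightarrow> real" where
  "Lp_norm M p f = (enn2real (\<integral>\<^sup>+ x. ennreal (\<bar>f x\<bar> powr p) \<partial>M)) powr (1 / p)"

definition cube :: "(nat \<Rightarrow> int) \<Rightarrow> (nat \<Rightarrow> real) set" where
  "cube a = Pi UNIV (\<lambda>n. {real_of_int (a n) ..< real_of_int (a n) + 1})"

definition Bp :: "real \<Rightarrow> ((nat \<Rightarrow> real) \<Rightarrow> real) set" where
  "Bp p = {f. memLp mu p f \<and>
     (\<forall>a :: nat \<Rightarrow> int. (\<integral>\<^sup>+ x \<in> cube a. ennreal (\<bar>f x\<bar> powr p) \<partial>mu) = 0)}"

section \<open>\<ell>^p(\<cc>, L^p[0,1]), indexed by the reals (a set of cardinality continuum)\<close>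

definition L01 :: "real measure" where
  "L01 = restrict_space lborel {0..1}"

definition ellp :: "real \<Rightarrow> (real \<Rightarrow> real \<Rightarrow> real) set" where
  "ellp p = {g. (\<forall>k. memLp L01 p (g k)) \<and>
     (\<integral>\<^sup>+ k. ennreal (Lp_norm L01 p (g k) powr p) \<partial>count_space UNIV) < \<infinity>}"

definition ellp_norm :: "real \<Rightarrow> (real \<Rightarrow> real \<Rightarrow> real) \<Rightarrow> real" where
  "ellp_norm p g =
     (enn2real (\<integral>\<^sup>+ k. ennreal (Lp_norm L01 p (g k) powr p) \<partial>count_space UNIV)) powr (1 / p)"

end

(*
  Coding each real r by the set of rationals below it gives continuum many pairwise disjoint
  rectangles cell r = \<Prod>i. S_i: the even side S_2n is [1,2) or [0,1) according as the n-th
  rational lies below r or not, and every odd side is [1/2,3/2). Each cell has measure one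
  (mu_star is squeezed between the volume of the cell and the product of the uniform
  distributions on its sides), and under mu restricted to cell r the coordinate x_1 - 1/2 is
  uniformly distributed on [0,1). A cube C_a meets each cell in a null set, because every odd
  side of C_a meets [1/2,3/2) in length at most 1/2. Hence
    T g = \<Sum>r. g_r (x_1 - 1/2) on cell r
  maps \<ell>^p(\<cc>, L^p[0,1]) isometrically into B^p, and P f = T (r \<mapsto> E[f | x_1] on cell r) is a
  projection onto the range of T of norm at most one, by the conditional Jensen inequality.
*)

theory Submission
  imports Defs "HOL-Probability.Probability"
begin

lemma Lp_norm_nonneg: "0 \<le> Lp_norm M p f"
  by (simp add: Lp_norm_def)

lemma Lp_norm_cong_AE:
  assumes "AE x in M. f x = g x"
  shows "Lp_norm M p f = Lp_norm M p g"
proof -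
  have "AE x in M. ennreal (\<bar>f x\<bar> powr p) = ennreal (\<bar>g x\<bar> powr p)"
    using assms by (rule eventually_mono) simp
  then have "(\<integral>\<^sup>+ x. ennreal (\<bar>f x\<bar> powr p) \<partial>M) = (\<integral>\<^sup>+ x. ennreal (\<bar>g x\<bar> powr p) \<partial>M)"
    by (rule nn_integral_cong_AE)
  then show ?thesis by (simp add: Lp_norm_def)
qed

lemma Lp_norm_zero [simp]: "Lp_norm M p (\<lambda>_. 0) = 0"
  by (simp add: Lp_norm_def)

lemma Lp_norm_eq_0_if_AE_zero: "(AE x in M. f x = 0) \<Longrightarrow> Lp_norm M p f = 0"
  using Lp_norm_cong_AE[where M = M and f = f and g = "\<lambda>_. 0" and p = p] by simp

lemma Lp_norm_diff_eq_0: "(AE x in M. f x = g x) \<Longrightarrow> Lp_norm M p (\<lambda>x. f x - g x) = 0"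
  by (rule Lp_norm_eq_0_if_AE_zero) (auto elim: eventually_mono)

lemma ennreal_Lp_norm_powr:
  assumes "memLp M p f" "0 < p"
  shows "ennreal (Lp_norm M p f powr p) = (\<integral>\<^sup>+ x. ennreal (\<bar>f x\<bar> powr p) \<partial>M)"
  using assms unfolding memLp_def Lp_norm_def
  by (simp add: powr_powr ennreal_enn2real_if less_top)

lemma AE_zero_if_Lp_norm_eq_0:
  assumes f: "memLp M p f" and "0 < p" "Lp_norm M p f = 0"
  shows "AE x in M. f x = 0"
proof -
  have "(\<integral>\<^sup>+ x. ennreal (\<bar>f x\<bar> powr p) \<partial>M) = 0"
    using ennreal_Lp_norm_powr[OF f \<open>0 < p\<close>] assms(3) \<open>0 < p\<close> by simp
  then have "AE x in M. ennreal (\<bar>f x\<bar> powr p) = 0"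
    using f by (subst (asm) nn_integral_0_iff_AE) (auto simp: memLp_def)
  then show ?thesis by (rule eventually_mono) simp
qed

lemma memLp_lincomb:
  assumes f: "memLp M p f" and g: "memLp M p g" and "0 < p"
  shows "memLp M p (\<lambda>x. a * f x + b * g x)"
proof -
  have [measurable]: "f \<in> borel_measurable M" "g \<in> borel_measurable M"
    using f g by (auto simp: memLp_def)
  define ca cb where "ca = 2 powr p * \<bar>a\<bar> powr p" and "cb = 2 powr p * \<bar>b\<bar> powr p"
  have pointwise: "\<bar>a * u + b * v\<bar> powr p \<le> ca * \<bar>u\<bar> powr p + cb * \<bar>v\<bar> powr p" for u v :: real
  proof -
    have "\<bar>a * u + b * v\<bar> powr p \<le> (2 * max \<bar>a * u\<bar> \<bar>b * v\<bar>) powr p"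
      using \<open>0 < p\<close> by (intro powr_mono2) (auto simp: max_def)
    also have "\<dots> \<le> 2 powr p * (\<bar>a * u\<bar> powr p + \<bar>b * v\<bar> powr p)"
      by (simp add: powr_mult max_def)
    finally show ?thesis by (simp add: ca_def cb_def abs_mult powr_mult algebra_simps)
  qed
  have "(\<integral>\<^sup>+ x. ennreal (\<bar>a * f x + b * g x\<bar> powr p) \<partial>M) \<le>
      (\<integral>\<^sup>+ x. ennreal ca * ennreal (\<bar>f x\<bar> powr p) + ennreal cb * ennreal (\<bar>g x\<bar> powr p) \<partial>M)"
    using pointwise by (intro nn_integral_mono)
      (simp add: ca_def cb_def ennreal_mult[symmetric] ennreal_plus[symmetric] del: ennreal_plus)
  also have "\<dots> = ennreal ca * (\<integral>\<^sup>+ x. ennreal (\<bar>f x\<bar> powr p) \<partial>M) +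
      ennreal cb * (\<integral>\<^sup>+ x. ennreal (\<bar>g x\<bar> powr p) \<partial>M)"
    by (simp add: nn_integral_add nn_integral_cmult)
  also have "\<dots> < \<infinity>" using f g by (simp add: memLp_def ennreal_mult_less_top)
  finally show ?thesis unfolding memLp_def by simp
qed

lemma countable_nonzero_if_finite_sums_le:
  fixes \<phi> :: "'a \<Rightarrow> ennreal"
  assumes sums: "\<And>F. finite F \<Longrightarrow> (\<Sum>r\<in>F. \<phi> r) \<le> C" and "C < \<infinity>"
  shows "countable {r. \<phi> r \<noteq> 0}"
proof -
  have fin: "\<phi> r < \<infinity>" for r
    using sums[of "{r}"] \<open>C < \<infinity>\<close> by (simp add: le_less_trans)
  have "(\<lambda>r. enn2real (\<phi> r)) summable_on UNIV"
  proof (rule nonneg_bdd_above_summable_on)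
    show "bdd_above (sum (\<lambda>r. enn2real (\<phi> r)) ` {F. F \<subseteq> UNIV \<and> finite F})"
    proof (rule bdd_aboveI, clarify)
      fix F :: "'a set" assume "finite F"
      have "(\<Sum>r\<in>F. enn2real (\<phi> r)) = enn2real (\<Sum>r\<in>F. \<phi> r)"
        using fin by (subst enn2real_sum) auto
      also have "\<dots> \<le> enn2real C"
        using sums[OF \<open>finite F\<close>] \<open>C < \<infinity>\<close> by (intro enn2real_mono) auto
      finally show "(\<Sum>r\<in>F. enn2real (\<phi> r)) \<le> enn2real C" .
    qed
  qed simp
  then have "countable {r \<in> UNIV. enn2real (\<phi> r) \<noteq> 0}"
    by (rule summable_countable_real)
  moreover have "{r \<in> UNIV. enn2real (\<phi> r) \<noteq> 0} = {r. \<phi> r \<noteq> 0}"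
    using fin by (auto simp: enn2real_eq_0_iff less_le)
  ultimately show ?thesis by simp
qed

lemma countable_nonzero_if_nn_integral_finite:
  fixes \<phi> :: "'a \<Rightarrow> ennreal"
  assumes "(\<integral>\<^sup>+ r. \<phi> r \<partial>count_space UNIV) < \<infinity>"
  shows "countable {r. \<phi> r \<noteq> 0}"
proof (rule countable_nonzero_if_finite_sums_le[OF _ assms])
  fix F :: "'a set" assume "finite F"
  then have "(\<Sum>r\<in>F. \<phi> r) = (\<integral>\<^sup>+ r. \<phi> r \<partial>count_space F)"
    by (simp add: nn_integral_count_space_finite)
  also have "\<dots> = (\<integral>\<^sup>+ r. \<phi> r * indicator F r \<partial>count_space UNIV)"
    by (rule nn_integral_count_space_indicator) simp
  also have "\<dots> \<le> (\<integral>\<^sup>+ r. \<phi> r \<partial>count_space UNIV)"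
    by (intro nn_integral_mono) (auto simp: indicator_def)
  finally show "(\<Sum>r\<in>F. \<phi> r) \<le> (\<integral>\<^sup>+ r. \<phi> r \<partial>count_space UNIV)" .
qed

lemma nn_integral_count_space_le_if_countable_le:
  fixes \<phi> :: "'a \<Rightarrow> ennreal"
  assumes le: "\<And>I. countable I \<Longrightarrow> (\<integral>\<^sup>+ r. \<phi> r \<partial>count_space I) \<le> C" and "C < \<infinity>"
  shows "(\<integral>\<^sup>+ r. \<phi> r \<partial>count_space UNIV) \<le> C"
proof -
  have "countable {r. \<phi> r \<noteq> 0}"
    using le \<open>C < \<infinity>\<close> countable_finite
    by (intro countable_nonzero_if_finite_sums_le) (auto simp: nn_integral_count_space_finite[symmetric])
  moreover have "(\<integral>\<^sup>+ r. \<phi> r \<partial>count_space UNIV) = (\<integral>\<^sup>+ r. \<phi> r \<partial>count_space {r. \<phi> r \<noteq> 0})"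
    by (intro nn_integral_count_space_eq) auto
  ultimately show ?thesis using le by simp
qed

lemma convex_on_abs_powr:
  assumes p: "1 \<le> p"
  shows "convex_on UNIV (\<lambda>x::real. \<bar>x\<bar> powr p)"
proof (rule convex_onI)
  fix t x y :: real assume t: "0 < t" "t < 1"
  have powr_le: "s powr p \<le> s" if "0 \<le> s" "s \<le> 1" for s :: real
    using powr_mono'[OF p that] that by simp
  have "\<bar>(1-t) * x + t * y\<bar> powr p \<le> ((1-t) * \<bar>x\<bar> + t * \<bar>y\<bar>) powr p"
    using t p abs_triangle_ineq[of "(1-t) * x" "t * y"] by (intro powr_mono2) (auto simp: abs_mult)
  also have "\<dots> \<le> (1-t) * \<bar>x\<bar> powr p + t * \<bar>y\<bar> powr p"
  proof (cases "x = 0 \<or> y = 0")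
    case False
    then show ?thesis
      using convex_onD[OF powr_convex[OF p], of t "\<bar>x\<bar>" "\<bar>y\<bar>"] t by simp
  next
    case True
    then show ?thesis
      using t p powr_le[of t] powr_le[of "1 - t"]
      by (auto simp: powr_mult intro!: mult_right_mono)
  qed
  finally show "\<bar>(1 - t) *\<^sub>R x + t *\<^sub>R y\<bar> powr p \<le> (1 - t) * \<bar>x\<bar> powr p + t * \<bar>y\<bar> powr p"
    by simp
qed simp

lemma integrable_if_nn_integral_powr_finite:
  assumes "finite_measure M" and f: "f \<in> borel_measurable M"
    and fin: "(\<integral>\<^sup>+ x. ennreal (\<bar>f x\<bar> powr p) \<partial>M) < \<infinity>" and p: "1 \<le> p"
  shows "integrable M f" "integrable M (\<lambda>x. \<bar>f x\<bar> powr p)"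
proof -
  interpret finite_measure M by fact
  show "integrable M (\<lambda>x. \<bar>f x\<bar> powr p)"
    using fin f by (intro integrableI_bounded) auto
  have "\<bar>u\<bar> \<le> 1 + \<bar>u\<bar> powr p" for u :: real
  proof (cases "\<bar>u\<bar> \<le> 1")
    case False
    then have "\<bar>u\<bar> powr 1 \<le> \<bar>u\<bar> powr p" using p by (intro powr_mono) auto
    then show ?thesis by simp
  qed (use powr_ge_zero[of "\<bar>u\<bar>" p] in linarith)
  then have "ennreal (norm (f x)) \<le> 1 + ennreal (\<bar>f x\<bar> powr p)" for x
    using ennreal_leI[of "norm (f x)" "1 + \<bar>f x\<bar> powr p"] by (simp add: ennreal_plus)
  then have "(\<integral>\<^sup>+ x. ennreal (norm (f x)) \<partial>M) \<le> (\<integral>\<^sup>+ x. 1 + ennreal (\<bar>f x\<bar> powr p) \<partial>M)"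
    by (intro nn_integral_mono)
  also have "\<dots> = emeasure M (space M) + (\<integral>\<^sup>+ x. ennreal (\<bar>f x\<bar> powr p) \<partial>M)"
    using f by (subst nn_integral_add) auto
  also have "\<dots> < \<infinity>" using fin by (simp add: less_top[symmetric])
  finally show "integrable M f" using f by (intro integrableI_bounded) auto
qed

lemma nn_integral_real_cond_exp_powr_le:
  assumes F: "sigma_finite_subalgebra M F" and M: "finite_measure M" and p: "1 \<le> p"
    and f: "f \<in> borel_measurable M" "(\<integral>\<^sup>+ x. ennreal (\<bar>f x\<bar> powr p) \<partial>M) < \<infinity>"
  shows "(\<integral>\<^sup>+ x. ennreal (\<bar>real_cond_exp M F f x\<bar> powr p) \<partial>M) \<le> (\<integral>\<^sup>+ x. ennreal (\<bar>f x\<bar> powr p) \<partial>M)"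
proof -
  interpret sigma_finite_subalgebra M F by (rule F)
  note int = integrable_if_nn_integral_powr_finite[OF M f p]
  have "AE x in M. \<bar>real_cond_exp M F f x\<bar> powr p \<le> real_cond_exp M F (\<lambda>x. \<bar>f x\<bar> powr p) x"
    using int convex_on_abs_powr[OF p]
    by (intro real_cond_exp_jensens_inequality(2)[where I = UNIV]) auto
  then have "(\<integral>\<^sup>+ x. ennreal (\<bar>real_cond_exp M F f x\<bar> powr p) \<partial>M) \<le>
      (\<integral>\<^sup>+ x. ennreal (real_cond_exp M F (\<lambda>x. \<bar>f x\<bar> powr p) x) \<partial>M)"
    by (intro nn_integral_mono_AE) (auto elim: eventually_mono intro: ennreal_leI)
  also have "\<dots> = ennreal (\<integral>x. real_cond_exp M F (\<lambda>x. \<bar>f x\<bar> powr p) x \<partial>M)"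
    using int by (intro nn_integral_eq_integral real_cond_exp_int(1) real_cond_exp_pos) auto
  also have "\<dots> = ennreal (\<integral>x. \<bar>f x\<bar> powr p \<partial>M)"
    using int by (simp add: real_cond_exp_int(2))
  also have "\<dots> = (\<integral>\<^sup>+ x. ennreal (\<bar>f x\<bar> powr p) \<partial>M)"
    using int by (intro nn_integral_eq_integral[symmetric]) auto
  finally show ?thesis .
qed

lemma vimage_algebra_measurable_factor:
  fixes h :: "'a \<Rightarrow> 'c::t1_space"
  assumes h: "h \<in> borel_measurable (vimage_algebra X f M)" and f: "f \<in> X \<rightarrow> space M"
    and "x \<in> X" "y \<in> X" "f x = f y"
  shows "h x = h y"
proof -
  have "h -` {h x} \<inter> X \<in> sets (vimage_algebra X f M)"
    using measurable_sets[OF h closed_singleton[THEN borel_closed]] by simp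
  then obtain A where A: "h -` {h x} \<inter> X = f -` A \<inter> X"
    unfolding sets_vimage_algebra2[OF f] by auto
  then have iff: "z \<in> X \<Longrightarrow> h z = h x \<longleftrightarrow> f z \<in> A" for z by blast
  have "f x \<in> A" using iff[of x] \<open>x \<in> X\<close> by simp
  then show ?thesis using iff[of y] assms(4,5) by simp
qed

definition partial_vol :: "(nat \<Rightarrow> real set) \<Rightarrow> nat \<Rightarrow> ennreal" where
  "partial_vol R n = (\<Prod>i<n. emeasure lborel (R i))"

lemma finite_rectD:
  assumes "finite_rect R"
  shows "partial_vol R \<longlonglongrightarrow> vol R" "vol R < \<infinity>" "R i \<in> sets borel"
proof -
  obtain v where v: "v < \<infinity>" "partial_vol R \<longlonglongrightarrow> v"
    using assms unfolding finite_rect_def partial_vol_def by auto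
  moreover have "vol R = v"
    using v(2) limI unfolding vol_def partial_vol_def by blast
  ultimately show "partial_vol R \<longlonglongrightarrow> vol R" "vol R < \<infinity>" by auto
  show "R i \<in> sets borel" using assms unfolding finite_rect_def by auto
qed

lemma finite_rectI:
  assumes "\<And>i. R i \<in> sets borel" "partial_vol R \<longlonglongrightarrow> v" "v < \<infinity>"
  shows "finite_rect R" "vol R = v"
  using assms limI unfolding finite_rect_def vol_def partial_vol_def by auto

lemma empty_rect: "finite_rect (\<lambda>i. {})" "vol (\<lambda>i. {}) = 0"
proof -
  have "\<forall>\<^sub>F n in sequentially. partial_vol (\<lambda>i. {}) n = 0"
    unfolding eventually_sequentially partial_vol_def by (auto intro!: exI[of _ 1])
  then have "partial_vol (\<lambda>i. {}) \<longlonglongrightarrow> 0" by (rule tendsto_eventually)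
  then show "finite_rect (\<lambda>i. {})" "vol (\<lambda>i. {}) = 0"
    using finite_rectI[of "\<lambda>i. {}"] by auto
qed

lemma tendsto_ennreal_rescale:
  fixes c d v :: ennreal and q :: "nat \<Rightarrow> ennreal"
  assumes lim: "(\<lambda>n. c * q n) \<longlonglongrightarrow> v" and "v < \<infinity>" and "d \<le> c"
  shows "(\<lambda>n. d * q n) \<longlonglongrightarrow> d * (v / c)"
proof -
  consider "c = 0" | "c = \<infinity>" | "0 < c" "c < \<infinity>"
    by (metis infinity_ennreal_def less_top not_gr_zero)
  then show ?thesis
  proof cases
    case 1
    then show ?thesis using \<open>d \<le> c\<close> by simp
  next
    case 2
    have "\<forall>\<^sub>F n in sequentially. c * q n < \<infinity>"
      using order_tendstoD(2)[OF lim \<open>v < \<infinity>\<close>] .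
    then have "\<forall>\<^sub>F n in sequentially. d * q n = 0"
      by eventually_elim (use 2 in \<open>auto simp: ennreal_mult_less_top\<close>)
    then show ?thesis using 2 by (simp add: tendsto_eventually)
  next
    case 3
    have "(\<lambda>n. inverse c * (c * q n)) \<longlonglongrightarrow> inverse c * v"
      using lim 3 by (intro ennreal_tendsto_cmult) (auto simp: less_top[symmetric])
    moreover have "inverse c * c = 1"
      using 3 ennreal_divide_self[of c] by (simp add: divide_ennreal_def mult.commute)
    then have "inverse c * (c * q n) = q n" for n
      by (simp add: mult.assoc[symmetric])
    ultimately have "q \<longlonglongrightarrow> v / c" by (simp add: divide_ennreal_def mult.commute)
    then show ?thesis
      using 3 \<open>d \<le> c\<close> \<open>v < \<infinity>\<close>
      by (intro tendsto_mult_ennreal tendsto_const) (auto simp: top_unique ennreal_divide_eq_top_iff)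
  qed
qed

lemma ennreal_mult_divide_less_top:
  fixes c d v :: ennreal
  assumes "d \<le> c" "v < \<infinity>"
  shows "d * (v / c) < \<infinity>"
proof -
  consider "c = 0" | "c = \<infinity>" | "0 < c" "c < \<infinity>"
    by (metis infinity_ennreal_def less_top not_gr_zero)
  then show ?thesis
  proof cases
    case 3
    have "d < \<infinity>" by (rule le_less_trans[OF \<open>d \<le> c\<close> 3(2)])
    moreover have "v / c < \<infinity>"
      using 3 \<open>v < \<infinity>\<close> by (auto simp: ennreal_divide_eq_top_iff less_top[symmetric])
    ultimately show ?thesis by (simp add: ennreal_mult_less_top)
  qed (use assms in \<open>simp_all add: divide_ennreal_def\<close>)
qed

lemma
  assumes R: "finite_rect R" and X: "X \<in> sets borel" "X \<subseteq> R j"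
  shows finite_rect_shrink_side: "finite_rect (R(j := X))"
    and vol_shrink_side: "vol (R(j := X)) = emeasure lborel X * (vol R / emeasure lborel (R j))"
proof -
  define q where "q n = (\<Prod>i\<in>{..<n}-{j}. emeasure lborel (R i))" for n
  have factor: "\<forall>\<^sub>F n in sequentially. partial_vol (R(j := Y)) n = emeasure lborel Y * q n" for Y
  proof (rule eventually_sequentiallyI[of "Suc j"])
    fix n assume "Suc j \<le> n"
    then have "partial_vol (R(j := Y)) n =
        emeasure lborel ((R(j := Y)) j) * (\<Prod>i\<in>{..<n}-{j}. emeasure lborel ((R(j := Y)) i))"
      unfolding partial_vol_def by (subst prod.remove[of _ j]) auto
    then show "partial_vol (R(j := Y)) n = emeasure lborel Y * q n"
      unfolding q_def by simp
  qed
  have "\<forall>\<^sub>F n in sequentially. partial_vol R n = emeasure lborel (R j) * q n"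
    using factor[of "R j"] by simp
  with finite_rectD(1)[OF R] have "(\<lambda>n. emeasure lborel (R j) * q n) \<longlonglongrightarrow> vol R"
    by (rule Lim_transform_eventually)
  moreover have X_le: "emeasure lborel X \<le> emeasure lborel (R j)"
    using X finite_rectD(3)[OF R, of j] by (intro emeasure_mono) auto
  ultimately have "(\<lambda>n. emeasure lborel X * q n) \<longlonglongrightarrow> emeasure lborel X * (vol R / emeasure lborel (R j))"
    using tendsto_ennreal_rescale finite_rectD(2)[OF R] by blast
  then have lim: "partial_vol (R(j := X)) \<longlonglongrightarrow> emeasure lborel X * (vol R / emeasure lborel (R j))"
    by (rule Lim_transform_eventually) (use factor[of X] in \<open>simp add: eq_commute\<close>)
  have fin: "emeasure lborel X * (vol R / emeasure lborel (R j)) < \<infinity>"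
    using X_le finite_rectD(2)[OF R] by (rule ennreal_mult_divide_less_top)
  have "(R(j := X)) i \<in> sets borel" for i
    using finite_rectD(3)[OF R, of i] X by simp
  from finite_rectI[OF this lim fin]
  show "finite_rect (R(j := X))" "vol (R(j := X)) = emeasure lborel X * (vol R / emeasure lborel (R j))"
    by auto
qed

lemma vol_split_side:
  assumes R: "finite_rect R" and B: "B \<in> sets borel"
  shows "vol (R(j := R j \<inter> B)) + vol (R(j := R j \<inter> - B)) = vol R"
proof -
  have Rj: "R j \<in> sets borel" using finite_rectD(3)[OF R] .
  let ?k = "vol R / emeasure lborel (R j)"
  have "vol (R(j := R j \<inter> B)) + vol (R(j := R j \<inter> - B)) =
      (emeasure lborel (R j \<inter> B) + emeasure lborel (R j \<inter> - B)) * ?k"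
    using Rj B by (simp add: vol_shrink_side[OF R] distrib_right borel_comp)
  also have "emeasure lborel (R j \<inter> B) + emeasure lborel (R j \<inter> - B) = emeasure lborel (R j)"
    using Rj B by (subst plus_emeasure) (auto simp: borel_comp intro!: arg_cong[where f = "emeasure lborel"])
  also have "emeasure lborel (R j) * ?k = vol R"
    using vol_shrink_side[OF R Rj order_refl, symmetric] by (simp only: fun_upd_triv)
  finally show ?thesis .
qed

section \<open>The outer measure \<open>mu_star\<close> and the measure \<open>mu\<close>\<close>

definition rect_covers :: "(nat \<Rightarrow> real) set \<Rightarrow> (nat \<Rightarrow> nat \<Rightarrow> real set) set" where
  "rect_covers A = {R. (\<forall>n. finite_rect (R n)) \<and> A \<subseteq> (\<Union>n. Pi UNIV (R n))}"

lemma mu_star_rect_covers: "mu_star A = (INF R \<in> rect_covers A. \<Sum>n. vol (R n))"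
  unfolding mu_star_def rect_covers_def by simp

lemma mu_star_le_cover: "R \<in> rect_covers A \<Longrightarrow> mu_star A \<le> (\<Sum>n. vol (R n))"
  unfolding mu_star_rect_covers by (rule INF_lower)

lemma mu_star_le_vol:
  assumes "finite_rect R" "A \<subseteq> Pi UNIV R"
  shows "mu_star A \<le> vol R"
proof -
  define R' where "R' n = (if n = 0 then R else (\<lambda>i. {}))" for n :: nat
  have "A \<subseteq> (\<Union>n. Pi UNIV (R' n))"
  proof
    fix x assume "x \<in> A"
    then have "x \<in> Pi UNIV (R' 0)" using assms by (auto simp: R'_def)
    then show "x \<in> (\<Union>n. Pi UNIV (R' n))" by blast
  qed
  then have "R' \<in> rect_covers A"
    using assms empty_rect unfolding rect_covers_def R'_def by auto
  then have "mu_star A \<le> (\<Sum>n. vol (R' n))" by (rule mu_star_le_cover)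
  also have "(\<Sum>n. vol (R' n)) = (\<Sum>n\<in>{0}. vol (R' n))"
    by (rule suminf_finite) (auto simp: R'_def empty_rect)
  finally show ?thesis by (simp add: R'_def)
qed

lemma mu_star_empty: "mu_star {} = 0"
  using mu_star_le_vol[OF empty_rect(1), of "{}"] empty_rect(2) by auto

lemma mu_star_mono: "A \<subseteq> B \<Longrightarrow> mu_star A \<le> mu_star B"
  unfolding mu_star_rect_covers by (rule INF_superset_mono) (auto simp: rect_covers_def)

lemma mu_star_countably_subadditive: "mu_star (\<Union>i. A i) \<le> (\<Sum>n. mu_star (A n))"
proof (rule ennreal_le_epsilon)
  fix e :: real assume "0 < e" "(\<Sum>n. mu_star (A n)) < top"
  then have "mu_star (A n) < mu_star (A n) + e * (1/2)^Suc n" for n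
    by (auto simp add: less_top dest!: ennreal_suminf_lessD)
  then have "\<forall>n. \<exists>R \<in> rect_covers (A n). (\<Sum>i. vol (R i)) < mu_star (A n) + e * (1/2)^Suc n"
    unfolding mu_star_rect_covers INF_less_iff by blast
  then obtain B where B: "\<And>n. B n \<in> rect_covers (A n)"
      and B_le: "\<And>n. (\<Sum>i. vol (B n i)) \<le> mu_star (A n) + e * (1/2)^(Suc n)"
    by (metis less_imp_le)
  define C where "C = case_prod B o prod_decode"
  have "C \<in> rect_covers (\<Union>i. A i)"
    unfolding rect_covers_def
  proof (intro CollectI conjI allI subsetI)
    fix k show "finite_rect (C k)"
      using B unfolding C_def rect_covers_def by (auto split: prod.splits)
  next
    fix x assume "x \<in> (\<Union>i. A i)"
    then obtain n i where "x \<in> Pi UNIV (B n i)" using B unfolding rect_covers_def by blast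
    moreover have "C (prod_encode (n, i)) = B n i" unfolding C_def by simp
    ultimately show "x \<in> (\<Union>k. Pi UNIV (C k))" by (metis UN_I UNIV_I)
  qed
  then have "mu_star (\<Union>i. A i) \<le> (\<Sum>i. vol (C i))" by (rule mu_star_le_cover)
  also have "\<dots> = (\<Sum>n. \<Sum>i. vol (B n i))"
    unfolding C_def comp_def by (intro suminf_ennreal_2dimen) auto
  also have "\<dots> \<le> (\<Sum>n. mu_star (A n) + e * (1/2) ^ Suc n)"
    by (intro suminf_le allI B_le) auto
  also have "\<dots> = (\<Sum>n. mu_star (A n)) + (\<Sum>n. ennreal e * ennreal ((1/2) ^ Suc n))"
    using \<open>0 < e\<close> by (subst suminf_add[symmetric])
                     (auto simp del: ennreal_suminf_cmult simp add: ennreal_mult[symmetric])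
  also have "\<dots> = (\<Sum>n. mu_star (A n)) + e"
    unfolding ennreal_suminf_cmult
    by (subst suminf_ennreal_eq[OF zero_le_power power_half_series]) auto
  finally show "mu_star (\<Union>i. A i) \<le> (\<Sum>n. mu_star (A n)) + e" .
qed

lemma outer_measure_space_mu_star: "outer_measure_space (Pow UNIV) mu_star"
  unfolding outer_measure_space_def positive_def increasing_def countably_subadditive_def
  using mu_star_empty mu_star_mono mu_star_countably_subadditive by auto

lemma mu_star_subadditive: "A \<inter> B = {} \<Longrightarrow> mu_star (A \<union> B) \<le> mu_star A + mu_star B"
proof -
  have "subadditive (Pow UNIV) mu_star"
    using ring_of_sets.countably_subadditive_subadditive[OF ring_of_sets_Pow[of UNIV]]
      outer_measure_space_mu_star
    unfolding outer_measure_space_def by blast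
  then show "A \<inter> B = {} \<Longrightarrow> mu_star (A \<union> B) \<le> mu_star A + mu_star B"
    by (rule subadditiveD) auto
qed

definition caratheodory_sets :: "(nat \<Rightarrow> real) set set" where
  "caratheodory_sets = lambda_system UNIV (Pow UNIV) mu_star"

lemma measure_space_caratheodory_sets: "measure_space UNIV caratheodory_sets mu_star"
  unfolding caratheodory_sets_def
  by (rule sigma_algebra.caratheodory_lemma[OF sigma_algebra_Pow outer_measure_space_mu_star])

lemma algebra_caratheodory_sets: "algebra UNIV caratheodory_sets"
  using measure_space_caratheodory_sets unfolding measure_space_def sigma_algebra_def by auto

lemma rect_covers_shrink_side:
  assumes R: "R \<in> rect_covers X" and B: "B \<in> sets borel"
  shows "(\<lambda>n. (R n)(j := R n j \<inter> B)) \<in> rect_covers ({x. x j \<in> B} \<inter> X)"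
proof -
  have fr: "finite_rect (R n)" for n using R unfolding rect_covers_def by auto
  have "{x. x j \<in> B} \<inter> X \<subseteq> (\<Union>n. Pi UNIV ((R n)(j := R n j \<inter> B)))"
  proof
    fix x assume x: "x \<in> {x. x j \<in> B} \<inter> X"
    then obtain n where "x \<in> Pi UNIV (R n)" using R unfolding rect_covers_def by blast
    with x have "x \<in> Pi UNIV ((R n)(j := R n j \<inter> B))" by (auto simp: Pi_iff)
    then show "x \<in> (\<Union>n. Pi UNIV ((R n)(j := R n j \<inter> B)))" by blast
  qed
  moreover have "finite_rect ((R n)(j := R n j \<inter> B))" for n
    using finite_rectD(3)[OF fr] B by (intro finite_rect_shrink_side[OF fr]) auto
  ultimately show ?thesis unfolding rect_covers_def by auto
qed

lemma coord_slab_caratheodory_sets: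
  assumes B: "B \<in> sets borel"
  shows "{x. x j \<in> B} \<in> caratheodory_sets"
proof -
  let ?S = "{x. x j \<in> B}"
  have compl: "UNIV - ?S = {x. x j \<in> - B}" by auto
  have "mu_star (?S \<inter> X) + mu_star ((UNIV - ?S) \<inter> X) \<le> mu_star X" for X
    unfolding mu_star_rect_covers[of X]
  proof (rule INF_greatest)
    fix R assume R: "R \<in> rect_covers X"
    then have fr: "finite_rect (R n)" for n unfolding rect_covers_def by auto
    have "mu_star (?S \<inter> X) + mu_star ((UNIV - ?S) \<inter> X) \<le>
        (\<Sum>n. vol ((R n)(j := R n j \<inter> B))) + (\<Sum>n. vol ((R n)(j := R n j \<inter> - B)))"
      unfolding compl using R B
      by (intro add_mono mu_star_le_cover rect_covers_shrink_side) (auto simp: borel_comp)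
    also have "\<dots> = (\<Sum>n. vol ((R n)(j := R n j \<inter> B)) + vol ((R n)(j := R n j \<inter> - B)))"
      by (rule suminf_add) (auto intro: summableI)
    also have "\<dots> = (\<Sum>n. vol (R n))"
      using vol_split_side[OF fr B] by simp
    finally show "mu_star (?S \<inter> X) + mu_star ((UNIV - ?S) \<inter> X) \<le> (\<Sum>n. vol (R n))" .
  qed
  moreover have "mu_star X \<le> mu_star (?S \<inter> X) + mu_star ((UNIV - ?S) \<inter> X)" for X
  proof -
    have "?S \<inter> X \<union> (UNIV - ?S) \<inter> X = X" by blast
    then show ?thesis using mu_star_subadditive[of "?S \<inter> X" "(UNIV - ?S) \<inter> X"] by auto
  qed
  ultimately show ?thesis
    unfolding caratheodory_sets_def lambda_system_def by (auto intro: antisym)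
qed

lemma cylinder_caratheodory_sets:
  "(\<forall>i<m. C i \<in> sets borel) \<and> (\<forall>i\<ge>m. C i = UNIV) \<Longrightarrow>
    Pi UNIV C \<in> caratheodory_sets"
proof (induction m arbitrary: C)
  interpret algebra UNIV caratheodory_sets by (rule algebra_caratheodory_sets)
  case 0
  then have "Pi UNIV C = UNIV" by auto
  then show ?case using top by simp
next
  case (Suc m)
  interpret algebra UNIV caratheodory_sets by (rule algebra_caratheodory_sets)
  have "Pi UNIV C = Pi UNIV (C(m := UNIV)) \<inter> {x. x m \<in> C m}"
    by (auto simp: Pi_iff split: if_splits)
  moreover have "Pi UNIV (C(m := UNIV)) \<in> caratheodory_sets"
    using Suc.prems by (intro Suc.IH) auto
  moreover have "{x. x m \<in> C m} \<in> caratheodory_sets"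
    using Suc.prems by (intro coord_slab_caratheodory_sets) auto
  ultimately show ?case by (metis Int)
qed

lemma B_inf_subset_caratheodory_sets: "B_inf \<subseteq> caratheodory_sets"
  unfolding B_inf_def
proof (rule sigma_algebra.sigma_sets_subset)
  show "sigma_algebra UNIV caratheodory_sets"
    using measure_space_caratheodory_sets unfolding measure_space_def by auto
  show "cylinders \<subseteq> caratheodory_sets"
    unfolding cylinders_def using cylinder_caratheodory_sets by auto
qed

lemma sigma_algebra_B_inf: "sigma_algebra UNIV B_inf"
  unfolding B_inf_def by (rule sigma_algebra_sigma_sets) auto

lemma space_mu [simp]: "space mu = UNIV"
  unfolding mu_def by simp

lemma sets_mu: "sets mu = B_inf"
  unfolding mu_def using sigma_algebra.sigma_sets_eq[OF sigma_algebra_B_inf]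
  by (simp add: sets_measure_of)

lemma emeasure_mu: "A \<in> sets mu \<Longrightarrow> emeasure mu A = mu_star A"
proof -
  assume "A \<in> sets mu"
  then have "A \<in> B_inf" by (simp add: sets_mu)
  then show ?thesis
    using measure_down[OF measure_space_caratheodory_sets sigma_algebra_B_inf B_inf_subset_caratheodory_sets]
    unfolding mu_def by (intro emeasure_measure_of_sigma) (auto simp: measure_space_def)
qed

lemma coord_slab_sets_mu: "B \<in> sets borel \<Longrightarrow> {x. x j \<in> B} \<in> sets mu"
proof -
  assume B: "B \<in> sets borel"
  have "{x. x j \<in> B} = Pi UNIV ((\<lambda>i. UNIV)(j := B))"
    by (auto simp: Pi_iff split: if_splits)
  also have "\<dots> \<in> cylinders" unfolding cylinders_def using B
    by (intro CollectI exI[of _ "(\<lambda>i. UNIV)(j := B)"] exI[of _ "Suc j"]) auto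
  finally show ?thesis unfolding sets_mu B_inf_def by (rule sigma_sets.Basic)
qed

lemma rect_sets_mu:
  assumes "\<And>i. R i \<in> sets borel"
  shows "Pi UNIV R \<in> sets mu"
proof -
  have "Pi UNIV R = (\<Inter>i. {x. x i \<in> R i})" by (auto simp: Pi_iff)
  also have "\<dots> \<in> sets mu"
    using assms coord_slab_sets_mu by (intro sets.countable_INT') auto
  finally show ?thesis .
qed

lemma measurable_coord [measurable]: "(\<lambda>x. x j) \<in> borel_measurable mu"
  by (rule measurableI) (auto simp: coord_slab_sets_mu vimage_def)

lemma emeasure_mu_le_vol:
  assumes "finite_rect R" "A \<in> sets mu" "A \<subseteq> Pi UNIV R"
  shows "emeasure mu A \<le> vol R"
  using assms emeasure_mu mu_star_le_vol by auto

definition unit_rect :: "(nat \<Rightarrow> real set) \<Rightarrow> bool" where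
  "unit_rect S \<longleftrightarrow> (\<forall>i. S i \<in> sets borel \<and> emeasure lborel (S i) = 1)"

lemma unit_rect_vol:
  assumes "unit_rect S"
  shows "finite_rect S" "vol S = 1"
proof -
  have "partial_vol S = (\<lambda>n. 1)"
    using assms by (auto simp: unit_rect_def partial_vol_def)
  then show "finite_rect S" "vol S = 1"
    using assms finite_rectI[of S 1] by (auto simp: unit_rect_def)
qed

lemma Pi_Int_slab: "Pi UNIV S \<inter> {x. x j \<in> B} = Pi UNIV (S(j := S j \<inter> B))"
  unfolding Pi_def by (auto split: if_splits)

definition unit_product :: "(nat \<Rightarrow> real set) \<Rightarrow> (nat \<Rightarrow> real) measure" where
  "unit_product S = (\<Pi>\<^sub>M i\<in>UNIV. uniform_measure lborel (S i))"

lemma space_unit_product [simp]: "space (unit_product S) = UNIV"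
  by (simp add: unit_product_def space_PiM)

lemma
  assumes "unit_rect S"
  shows rect_sets_unit_product: "(\<And>i. X i \<in> sets borel) \<Longrightarrow> Pi UNIV X \<in> sets (unit_product S)"
    and slab_sets_unit_product: "B \<in> sets borel \<Longrightarrow> {x. x j \<in> B} \<in> sets (unit_product S)"
    and product_prob_space_unit_product:
      "product_prob_space (\<lambda>i. uniform_measure lborel (S i))"
proof -
  show "Pi UNIV X \<in> sets (unit_product S)" if "\<And>i. X i \<in> sets borel"
    using sets_PiM_I_countable[of UNIV X] that by (simp add: unit_product_def PiE_def)
  show "{x. x j \<in> B} \<in> sets (unit_product S)" if "B \<in> sets borel"
    using sets_Collect_single[of j UNIV B "\<lambda>i. uniform_measure lborel (S i)"] that
      space_unit_product[of S]
    by (simp add: unit_product_def)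
  show "product_prob_space (\<lambda>i. uniform_measure lborel (S i))"
    using assms unfolding unit_rect_def
    by (intro product_prob_space.intro product_sigma_finite.intro product_prob_space_axioms.intro
        prob_space_imp_sigma_finite prob_space_uniform_measure) auto
qed

lemma emeasure_unit_product_slabs:
  assumes S: "unit_rect S" and X: "\<And>i. X i \<in> sets borel"
  shows "emeasure (unit_product S) {x. \<forall>i<n. x i \<in> X i} = (\<Prod>i<n. emeasure lborel (S i \<inter> X i))"
proof -
  interpret product_prob_space "\<lambda>i. uniform_measure lborel (S i)" UNIV
    by (rule product_prob_space_unit_product[OF S])
  have "{x \<in> space (unit_product S). \<forall>i\<in>{..<n}. x i \<in> X i} = {x. \<forall>i<n. x i \<in> X i}"
    by auto
  moreover have "emeasure (unit_product S) {x \<in> space (unit_product S). \<forall>i\<in>{..<n}. x i \<in> X i} =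
      (\<Prod>i<n. emeasure (uniform_measure lborel (S i)) (X i))"
    unfolding unit_product_def using X by (intro emeasure_PiM_Collect) auto
  ultimately show ?thesis using S X by (simp add: unit_rect_def divide_ennreal_def)
qed

lemma unit_product_le_vol:
  assumes S: "unit_rect S" and R: "finite_rect R"
  shows "emeasure (unit_product S) (Pi UNIV R) \<le> vol R"
proof (rule LIMSEQ_le_const[OF finite_rectD(1)[OF R]], intro exI allI impI)
  fix n
  have R_sets: "R i \<in> sets borel" for i using finite_rectD(3)[OF R] .
  have "{x. \<forall>i<n. x i \<in> R i} = Pi UNIV (\<lambda>i. if i < n then R i else UNIV)"
    unfolding Pi_def by (auto split: if_splits)
  then have "{x. \<forall>i<n. x i \<in> R i} \<in> sets (unit_product S)"
    using R_sets by (auto intro: rect_sets_unit_product[OF S])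
  then have "emeasure (unit_product S) (Pi UNIV R) \<le> emeasure (unit_product S) {x. \<forall>i<n. x i \<in> R i}"
    by (intro emeasure_mono) auto
  also have "\<dots> \<le> partial_vol R n"
    unfolding emeasure_unit_product_slabs[OF S R_sets] partial_vol_def
    using S R_sets by (intro prod_mono_ennreal emeasure_mono) (auto simp: unit_rect_def)
  finally show "emeasure (unit_product S) (Pi UNIV R) \<le> partial_vol R n" .
qed

lemma unit_product_le_mu_star:
  assumes S: "unit_rect S" and A: "A \<in> sets (unit_product S)"
  shows "emeasure (unit_product S) A \<le> mu_star A"
  unfolding mu_star_rect_covers
proof (rule INF_greatest)
  fix R assume "R \<in> rect_covers A"
  then have R: "finite_rect (R n)" for n
    unfolding rect_covers_def by auto
  from \<open>R \<in> rect_covers A\<close> have cover: "A \<subseteq> (\<Union>n. Pi UNIV (R n))"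
    unfolding rect_covers_def by auto
  have R_sets: "Pi UNIV (R n) \<in> sets (unit_product S)" for n
    using finite_rectD(3)[OF R] by (rule rect_sets_unit_product[OF S])
  have "emeasure (unit_product S) A \<le> emeasure (unit_product S) (\<Union>n. Pi UNIV (R n))"
    using cover R_sets by (intro emeasure_mono) auto
  also have "\<dots> \<le> (\<Sum>n. emeasure (unit_product S) (Pi UNIV (R n)))"
    using R_sets by (intro emeasure_subadditive_countably) auto
  also have "\<dots> \<le> (\<Sum>n. vol (R n))"
    by (intro suminf_le unit_product_le_vol[OF S R]) auto
  finally show "emeasure (unit_product S) A \<le> (\<Sum>n. vol (R n))" .
qed

lemma emeasure_unit_product_rect_slab:
  assumes S: "unit_rect S" and B: "B \<in> sets borel"
  shows "emeasure (unit_product S) (Pi UNIV S \<inter> {x. x j \<in> B}) = emeasure lborel (S j \<inter> B)"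
proof -
  interpret product_prob_space "\<lambda>i. uniform_measure lborel (S i)" UNIV
    by (rule product_prob_space_unit_product[OF S])
  have S_sets: "S i \<in> sets borel" and S_1: "emeasure lborel (S i) = 1" for i
    using S by (auto simp: unit_rect_def)
  have "AE x in uniform_measure lborel (S i). x \<in> S i" for i
    using S_sets by (intro AE_uniform_measureI) auto
  then have "AE x in unit_product S. \<forall>i. x i \<in> S i"
    unfolding unit_product_def by (subst AE_all_countable) (auto intro: AE_component)
  then have "emeasure (unit_product S) (Pi UNIV S \<inter> {x. x j \<in> B}) =
      emeasure (unit_product S) {x \<in> space (unit_product S). x j \<in> B}"
    using S_sets B slab_sets_unit_product[OF S B] rect_sets_unit_product[OF S, of "S(j := S j \<inter> B)"]
    by (intro emeasure_eq_AE) (auto simp: Pi_iff Pi_Int_slab[symmetric])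
  also have "\<dots> = emeasure (uniform_measure lborel (S j)) B"
    unfolding unit_product_def using B by (intro emeasure_PiM_Collect_single) auto
  finally show ?thesis using S_sets S_1 B by (simp add: Int_commute divide_ennreal_def)
qed

lemma emeasure_mu_unit_rect_slab:
  assumes S: "unit_rect S" and B: "B \<in> sets borel"
  shows "emeasure mu (Pi UNIV S \<inter> {x. x j \<in> B}) = emeasure lborel (S j \<inter> B)"
proof (rule antisym)
  have S_sets: "S i \<in> sets borel" for i using S by (auto simp: unit_rect_def)
  have "Pi UNIV S \<inter> {x. x j \<in> B} \<subseteq> Pi UNIV (S(j := S j \<inter> B))" by (auto simp: Pi_iff)
  then have "emeasure mu (Pi UNIV S \<inter> {x. x j \<in> B}) \<le> vol (S(j := S j \<inter> B))"
    using S_sets B unit_rect_vol[OF S]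
    by (intro emeasure_mu_le_vol finite_rect_shrink_side sets.Int rect_sets_mu coord_slab_sets_mu) auto
  also have "\<dots> = emeasure lborel (S j \<inter> B)"
    using S_sets B S unit_rect_vol[OF S] by (simp add: vol_shrink_side unit_rect_def)
  finally show "emeasure mu (Pi UNIV S \<inter> {x. x j \<in> B}) \<le> emeasure lborel (S j \<inter> B)" .
  have "Pi UNIV S \<inter> {x. x j \<in> B} \<in> sets (unit_product S) \<inter> sets mu"
    unfolding Pi_Int_slab using S_sets B by (auto intro!: rect_sets_unit_product[OF S] rect_sets_mu)
  then show "emeasure lborel (S j \<inter> B) \<le> emeasure mu (Pi UNIV S \<inter> {x. x j \<in> B})"
    using unit_product_le_mu_star[OF S] emeasure_unit_product_rect_slab[OF S B] emeasure_mu
    by (metis IntD1 IntD2)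
qed

section \<open>Continuum many disjoint cells\<close>

lemma vol_eq_0_if_odd_sides_half:
  assumes sets: "\<And>i. Q i \<in> sets borel"
    and le_1: "\<And>i. emeasure lborel (Q i) \<le> 1"
    and odd_le: "\<And>i. odd i \<Longrightarrow> emeasure lborel (Q i) \<le> ennreal (1/2)"
  shows "finite_rect Q" "vol Q = 0"
proof -
  have bound: "partial_vol Q n \<le> ennreal ((1/2) ^ (n div 2))" for n
  proof (induction n)
    case (Suc n)
    have "partial_vol Q (Suc n) = partial_vol Q n * emeasure lborel (Q n)"
      by (simp add: partial_vol_def)
    also have "\<dots> \<le> ennreal ((1/2) ^ (n div 2)) * ennreal (if odd n then 1/2 else 1)"
      using Suc.IH le_1 odd_le by (intro mult_mono) auto
    also have "\<dots> = ennreal ((1/2) ^ (Suc n div 2))"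
      by (subst ennreal_mult[symmetric]) (auto elim!: oddE evenE simp: mult.commute)
    finally show ?case .
  qed (simp add: partial_vol_def)
  have "(\<lambda>n. (1/2::real) ^ (n div 2)) \<longlonglongrightarrow> 0"
    by (rule filterlim_compose[OF LIMSEQ_power_zero filterlim_at_top_div_const_nat]) simp_all
  then have lim: "(\<lambda>n. ennreal ((1/2) ^ (n div 2))) \<longlonglongrightarrow> ennreal 0"
    by (rule tendsto_ennrealI)
  have "partial_vol Q \<longlonglongrightarrow> 0"
    using tendsto_sandwich[OF _ _ tendsto_const lim] bound by simp
  with finite_rectI[OF sets] show "finite_rect Q" "vol Q = 0" by auto
qed

definition rat_below :: "real \<Rightarrow> nat \<Rightarrow> bool" where
  "rat_below r n \<longleftrightarrow> real_of_rat (from_nat n) < r"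

lemma rat_below_separates:
  assumes "r < s"
  shows "\<exists>n. rat_below r n \<noteq> rat_below s n"
proof -
  obtain q :: rat where "r < of_rat q" "of_rat q < s" using of_rat_dense[OF assms] by blast
  then have "rat_below r (to_nat q) \<noteq> rat_below s (to_nat q)" by (simp add: rat_below_def)
  then show ?thesis by blast
qed

definition cell_side :: "real \<Rightarrow> nat \<Rightarrow> real set" where
  "cell_side r i =
    (if odd i then {1/2..<3/2} else if rat_below r (i div 2) then {1..<2} else {0..<1})"

definition cell :: "real \<Rightarrow> (nat \<Rightarrow> real) set" where
  "cell r = Pi UNIV (cell_side r)"

lemma unit_rect_cell_side: "unit_rect (cell_side r)"
  by (simp add: unit_rect_def cell_side_def)

lemma cell_sets_mu [measurable]: "cell r \<in> sets mu"
  unfolding cell_def by (rule rect_sets_mu) (simp add: cell_side_def)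

lemma cell_disjoint:
  assumes "r \<noteq> s"
  shows "cell r \<inter> cell s = {}"
proof -
  obtain n where n: "rat_below r n \<noteq> rat_below s n"
    using assms rat_below_separates[of r s] rat_below_separates[of s r] by (metis linorder_neq_iff)
  have "cell_side r (2*n) \<inter> cell_side s (2*n) = {}" using n by (auto simp: cell_side_def)
  then show ?thesis unfolding cell_def by (auto simp: Pi_iff)
qed

lemma cell_coord_1: "x \<in> cell r \<Longrightarrow> x 1 - 1/2 \<in> {0..<1}"
  using Pi_mem[of x UNIV "cell_side r" 1] by (auto simp: cell_def cell_side_def)

lemma emeasure_cell_slab:
  assumes "B \<in> sets borel"
  shows "emeasure mu (cell r \<inter> {x. x 1 \<in> B}) = emeasure lborel ({1/2..<3/2} \<inter> B)"
  using emeasure_mu_unit_rect_slab[OF unit_rect_cell_side assms, of r 1]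
  by (simp add: cell_def cell_side_def)

lemma emeasure_cell: "emeasure mu (cell r) = 1"
  using emeasure_cell_slab[of UNIV r] by simp

lemma emeasure_cube_Int_cell: "emeasure mu (cube a \<inter> cell r) = 0"
proof -
  define Q where "Q i = {real_of_int (a i)..<real_of_int (a i) + 1} \<inter> cell_side r i" for i
  have Q_sets: "Q i \<in> sets borel" for i by (simp add: Q_def cell_side_def)
  have "emeasure lborel (Q i) \<le> emeasure lborel (cell_side r i)" for i
    unfolding Q_def by (intro emeasure_mono) (auto simp: cell_side_def)
  then have "emeasure lborel (Q i) \<le> 1" for i
    using unit_rect_cell_side[of r] by (simp add: unit_rect_def)
  moreover have "emeasure lborel (Q i) \<le> ennreal (1/2)" if "odd i" for i
  proof (cases "a i \<le> 0")
    case True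
    then have "Q i \<subseteq> {1/2..<1}" using that by (auto simp: Q_def cell_side_def)
    then show ?thesis using emeasure_mono[of "Q i" "{1/2..<1}" lborel] by simp
  next
    case False
    then have "Q i \<subseteq> {1..<3/2}" using that by (auto simp: Q_def cell_side_def)
    then show ?thesis using emeasure_mono[of "Q i" "{1..<3/2}" lborel] by simp
  qed
  ultimately have "finite_rect Q" "vol Q = 0"
    using vol_eq_0_if_odd_sides_half[OF Q_sets] by auto
  moreover have "cube a \<inter> cell r = Pi UNIV Q"
    unfolding cube_def cell_def Q_def by auto
  ultimately show ?thesis
    using emeasure_mu_le_vol[of Q "cube a \<inter> cell r"] rect_sets_mu[OF Q_sets] by simp
qed

definition cell_measure :: "real \<Rightarrow> (nat \<Rightarrow> real) measure" where
  "cell_measure r = density mu (indicator (cell r))"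

lemma sets_cell_measure [simp, measurable_cong]: "sets (cell_measure r) = sets mu"
  by (simp add: cell_measure_def)

lemma space_cell_measure [simp]: "space (cell_measure r) = UNIV"
  by (simp add: cell_measure_def)

lemma AE_cell_measure: "(AE x in cell_measure r. P x) \<longleftrightarrow> (AE x in mu. x \<in> cell r \<longrightarrow> P x)"
  unfolding cell_measure_def by (subst AE_density) (auto simp: indicator_def)

lemma nn_integral_cell_measure:
  "f \<in> borel_measurable mu \<Longrightarrow>
    (\<integral>\<^sup>+ x. f x \<partial>cell_measure r) = (\<integral>\<^sup>+ x. indicator (cell r) x * f x \<partial>mu)"
  unfolding cell_measure_def by (rule nn_integral_density) auto

lemma measurable_cell_coord [measurable]: "(\<lambda>x. x 1 - 1/2) \<in> borel_measurable (cell_measure r)"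
  by measurable

lemma prob_space_cell_measure: "prob_space (cell_measure r)"
  using sets.top[of mu] by (intro prob_spaceI) (simp add: cell_measure_def emeasure_restricted emeasure_cell)

lemma distr_cell_measure:
  "distr (cell_measure r) lborel (\<lambda>x. x 1 - 1/2) = density lborel (indicator {0..<1})"
proof (rule measure_eqI)
  fix A assume "A \<in> sets (distr (cell_measure r) lborel (\<lambda>x. x 1 - 1/2))"
  then have A [measurable]: "A \<in> sets borel" by simp
  define A' where "A' = (+) (-1/2) -` A"
  have shifted: "A' \<in> sets borel"
    using measurable_sets[of "(+) (-1/2::real)" borel borel A] by (simp add: A'_def)
  have "emeasure (distr (cell_measure r) lborel (\<lambda>x. x 1 - 1/2)) A =
      emeasure (cell_measure r) ((\<lambda>x. x 1 - 1/2) -` A \<inter> space (cell_measure r))"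
    using measurable_cell_coord A by (intro emeasure_distr) simp_all
  also have "\<dots> = emeasure (cell_measure r) {x. x 1 \<in> A'}"
    by (rule arg_cong[where f = "emeasure (cell_measure r)"]) (auto simp: A'_def)
  also have "\<dots> = emeasure mu (cell r \<inter> {x. x 1 \<in> A'})"
    unfolding cell_measure_def by (rule emeasure_restricted[OF cell_sets_mu coord_slab_sets_mu[OF shifted]])
  also have "\<dots> = emeasure lborel ((+) (-1/2) -` ({0..<1} \<inter> A))"
    unfolding emeasure_cell_slab[OF shifted]
    by (auto simp: A'_def intro!: arg_cong[where f = "emeasure lborel"])
  also have "\<dots> = emeasure (distr lborel borel ((+) (-1/2))) ({0..<1} \<inter> A)"
    by (subst emeasure_distr) auto
  also have "\<dots> = emeasure (density lborel (indicator {0..<1})) A"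
    by (simp add: lborel_distr_plus emeasure_restricted)
  finally show "emeasure (distr (cell_measure r) lborel (\<lambda>x. x 1 - 1/2)) A =
      emeasure (density lborel (indicator {0..<1})) A" .
qed simp

lemma space_L01 [simp]: "space L01 = {0..1}"
  by (simp add: L01_def)

lemma sets_L01: "A \<in> sets L01 \<longleftrightarrow> A \<subseteq> {0..1} \<and> A \<in> sets borel"
  unfolding L01_def by (subst sets_restrict_space_iff) auto

lemma borel_measurable_zero_extension:
  fixes h :: "real \<Rightarrow> 'b::{zero, topological_space}"
  assumes "h \<in> borel_measurable L01"
  shows "(\<lambda>t. if t \<in> {0..1} then h t else 0) \<in> borel_measurable borel"
  using assms unfolding L01_def
  by (subst (asm) measurable_restrict_space_iff) (auto simp: measurable_lborel1)

lemma nn_integral_L01: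
  "(\<integral>\<^sup>+ t. f t \<partial>L01) = (\<integral>\<^sup>+ t. indicator {0..<1} t * f t \<partial>lborel)"
proof -
  have "(\<integral>\<^sup>+ t. f t \<partial>L01) = (\<integral>\<^sup>+ t. f t * indicator {0..1} t \<partial>lborel)"
    unfolding L01_def by (rule nn_integral_restrict_space) auto
  also have "\<dots> = (\<integral>\<^sup>+ t. indicator {0..<1} t * f t \<partial>lborel)"
    using AE_lborel_singleton[of 1]
    by (intro nn_integral_cong_AE) (auto elim!: eventually_mono split: split_indicator)
  finally show ?thesis .
qed

lemma nn_integral_cell_L01:
  fixes f :: "real \<Rightarrow> ennreal"
  assumes f: "f \<in> borel_measurable L01"
  shows "(\<integral>\<^sup>+ x. indicator (cell r) x * f (x 1 - 1/2) \<partial>mu) = (\<integral>\<^sup>+ t. f t \<partial>L01)"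
proof -
  define F where "F t = (if t \<in> {0..1} then f t else 0)" for t
  have F [measurable]: "F \<in> borel_measurable borel"
    unfolding F_def by (rule borel_measurable_zero_extension[OF f])
  have "(\<integral>\<^sup>+ x. indicator (cell r) x * f (x 1 - 1/2) \<partial>mu) =
      (\<integral>\<^sup>+ x. indicator (cell r) x * F (x 1 - 1/2) \<partial>mu)"
    by (intro nn_integral_cong) (auto simp: F_def indicator_def dest: cell_coord_1)
  also have "\<dots> = (\<integral>\<^sup>+ x. F (x 1 - 1/2) \<partial>cell_measure r)"
    by (rule nn_integral_cell_measure[symmetric]) measurable
  also have "\<dots> = (\<integral>\<^sup>+ t. F t \<partial>distr (cell_measure r) lborel (\<lambda>x. x 1 - 1/2))"
    by (rule nn_integral_distr[symmetric]) auto
  also have "\<dots> = (\<integral>\<^sup>+ t. indicator {0..<1} t * F t \<partial>lborel)"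
    unfolding distr_cell_measure by (rule nn_integral_density) auto
  also have "\<dots> = (\<integral>\<^sup>+ t. F t \<partial>L01)"
    by (rule nn_integral_L01[symmetric])
  also have "\<dots> = (\<integral>\<^sup>+ t. f t \<partial>L01)"
    by (intro nn_integral_cong) (simp add: F_def)
  finally show ?thesis .
qed

lemma AE_cell_of_AE_L01:
  assumes "AE t in L01. P t"
  shows "AE x in mu. x \<in> cell r \<longrightarrow> P (x 1 - 1/2)"
proof -
  obtain N where N: "{t \<in> space L01. \<not> P t} \<subseteq> N" "emeasure L01 N = 0" "N \<in> sets L01"
    using AE_E[OF assms] by blast
  then have N_sets [measurable]: "N \<in> sets borel"
    using sets_L01 by auto
  have "(\<integral>\<^sup>+ t. indicator N t \<partial>L01) = 0"
    using N by simp
  then have "(\<integral>\<^sup>+ x. indicator (cell r) x * indicator N (x 1 - 1/2) \<partial>mu) = 0"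
    by (subst nn_integral_cell_L01) (auto simp: L01_def measurable_restrict_space1)
  then have "AE x in mu. indicator (cell r) x * indicator N (x 1 - 1/2) = (0::ennreal)"
    by (subst (asm) nn_integral_0_iff_AE) auto
  then show ?thesis
  proof (rule eventually_mono)
    fix x assume h: "indicator (cell r) x * indicator N (x 1 - 1/2) = (0::ennreal)"
    show "x \<in> cell r \<longrightarrow> P (x 1 - 1/2)"
    proof
      assume x: "x \<in> cell r"
      then have "x 1 - 1/2 \<notin> N" using h by (simp add: indicator_def)
      moreover have "x 1 - 1/2 \<in> space L01" using cell_coord_1[OF x] by simp
      ultimately show "P (x 1 - 1/2)" using N(1) by blast
    qed
  qed
qed

lemma AE_L01_of_AE_cell:
  assumes P: "{t \<in> space L01. P t} \<in> sets L01"
    and ae: "AE x in mu. x \<in> cell r \<longrightarrow> P (x 1 - 1/2)"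
  shows "AE t in L01. P t"
proof -
  define N where "N = {t \<in> {0..1}. \<not> P t}"
  have "N = space L01 - {t \<in> space L01. P t}" by (auto simp: N_def)
  then have N [measurable]: "N \<in> sets borel"
    using sets.compl_sets[OF P] sets_L01 by auto
  have "AE x in cell_measure r. x 1 - 1/2 \<notin> N"
    using ae by (auto simp: AE_cell_measure N_def elim!: eventually_mono)
  then have "AE t in distr (cell_measure r) lborel (\<lambda>x. x 1 - 1/2). t \<notin> N"
    by (subst AE_distr_iff) auto
  then have "AE t in lborel. t \<in> {0..<1} \<longrightarrow> t \<notin> N"
    unfolding distr_cell_measure by (subst (asm) AE_density) (auto simp: indicator_def)
  then have "AE t in lborel. t \<in> {0..1} \<longrightarrow> P t"
    using AE_lborel_singleton[of 1] by eventually_elim (auto simp: N_def)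
  then show ?thesis
    unfolding L01_def by (subst AE_restrict_space_iff) auto
qed

section \<open>Embedding \<open>\<ell>^p(\<cc>, L^p[0,1])\<close> into \<open>B^p\<close>\<close>

lemma nn_integral_cube_powr_eq_0_iff:
  assumes "f \<in> borel_measurable mu"
  shows "(\<integral>\<^sup>+ x \<in> cube a. ennreal (\<bar>f x\<bar> powr p) \<partial>mu) = 0 \<longleftrightarrow> (AE x in mu. x \<in> cube a \<longrightarrow> f x = 0)"
proof -
  have [measurable]: "cube a \<in> sets mu"
    unfolding cube_def by (rule rect_sets_mu) simp
  show ?thesis
    using assms by (subst nn_integral_0_iff_AE) (auto simp: indicator_def intro!: AE_cong)
qed

lemma Bp_iff:
  "f \<in> Bp p \<longleftrightarrow> memLp mu p f \<and> (\<forall>a. AE x in mu. x \<in> cube a \<longrightarrow> f x = 0)"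
  unfolding Bp_def memLp_def by (simp add: nn_integral_cube_powr_eq_0_iff cong: conj_cong)

lemma Bp_lincomb:
  assumes "f \<in> Bp p" "g \<in> Bp p" "0 < p"
  shows "(\<lambda>x. a * f x + b * g x) \<in> Bp p"
proof -
  have "AE x in mu. x \<in> cube c \<longrightarrow> a * f x + b * g x = 0" for c
  proof -
    have "AE x in mu. x \<in> cube c \<longrightarrow> f x = 0" "AE x in mu. x \<in> cube c \<longrightarrow> g x = 0"
      using assms(1,2) by (simp_all add: Bp_iff)
    then show ?thesis by eventually_elim simp
  qed
  moreover have "memLp mu p (\<lambda>x. a * f x + b * g x)"
    using assms by (intro memLp_lincomb) (simp_all add: Bp_iff)
  ultimately show ?thesis by (simp add: Bp_iff)
qed

definition ellp_support :: "real \<Rightarrow> (real \<Rightarrow> real \<Rightarrow> real) \<Rightarrow> real set" where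
  "ellp_support p g = {r. Lp_norm L01 p (g r) \<noteq> 0}"

lemma ellp_support_eq:
  "0 < p \<Longrightarrow> ellp_support p g = {r. ennreal (Lp_norm L01 p (g r) powr p) \<noteq> 0}"
  using Lp_norm_nonneg[of L01 p] by (auto simp: ellp_support_def ennreal_eq_0_iff not_le)

lemma countable_ellp_support:
  assumes "g \<in> ellp p" "0 < p"
  shows "countable (ellp_support p g)"
proof -
  have "(\<integral>\<^sup>+ r. ennreal (Lp_norm L01 p (g r) powr p) \<partial>count_space UNIV) < \<infinity>"
    using assms(1) by (simp add: ellp_def)
  from countable_nonzero_if_nn_integral_finite[OF this] show ?thesis
    by (simp only: ellp_support_eq[OF assms(2)])
qed

definition cell_index :: "(nat \<Rightarrow> real) \<Rightarrow> real" where
  "cell_index x = (THE r. x \<in> cell r)"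

definition cell_embed :: "real set \<Rightarrow> (real \<Rightarrow> real \<Rightarrow> real) \<Rightarrow> (nat \<Rightarrow> real) \<Rightarrow> real" where
  "cell_embed U g x = (if \<exists>r\<in>U. x \<in> cell r then g (cell_index x) (x 1 - 1/2) else 0)"

lemma cell_index_eq: "x \<in> cell r \<Longrightarrow> cell_index x = r"
  unfolding cell_index_def using cell_disjoint by (intro the_equality) auto

lemma cell_embed_on_cell:
  assumes x: "x \<in> cell r"
  shows "cell_embed U g x = (if r \<in> U then g r (x 1 - 1/2) else 0)"
proof -
  have "(\<exists>s\<in>U. x \<in> cell s) \<longleftrightarrow> r \<in> U" using x by (metis IntI cell_disjoint empty_iff)
  then show ?thesis using cell_index_eq[OF x] by (simp add: cell_embed_def)
qed

lemma cell_embed_off_cells: "(\<forall>r\<in>U. x \<notin> cell r) \<Longrightarrow> cell_embed U g x = 0"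
  by (simp add: cell_embed_def)

lemma cell_embed_lincomb:
  "cell_embed U (\<lambda>k t. a * g k t + b * h k t) x = a * cell_embed U g x + b * cell_embed U h x"
  by (simp add: cell_embed_def)

lemma cell_embed_subset:
  assumes "S \<subseteq> U"
  shows "cell_embed S g = cell_embed U (\<lambda>r. if r \<in> S then g r else (\<lambda>_. 0))"
proof
  fix x show "cell_embed S g x = cell_embed U (\<lambda>r. if r \<in> S then g r else (\<lambda>_. 0)) x"
    using assms by (cases "\<exists>r. x \<in> cell r") (auto simp: cell_embed_on_cell cell_embed_off_cells)
qed

lemma borel_measurable_cell_L01:
  fixes f :: "real \<Rightarrow> 'b::{zero, topological_space}"
  assumes "f \<in> borel_measurable L01"
  shows "\<exists>h \<in> borel_measurable mu. \<forall>x \<in> cell r. f (x 1 - 1/2) = h x"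
proof
  have [measurable]: "(\<lambda>t. if t \<in> {0..1} then f t else 0) \<in> borel_measurable borel"
    by (rule borel_measurable_zero_extension[OF assms])
  show "(\<lambda>x. if x 1 - 1/2 \<in> {0..1} then f (x 1 - 1/2) else 0) \<in> borel_measurable mu"
    by measurable
  show "\<forall>x \<in> cell r. f (x 1 - 1/2) = (if x 1 - 1/2 \<in> {0..1} then f (x 1 - 1/2) else 0)"
  proof
    fix x assume "x \<in> cell r"
    then have "x 1 - 1/2 \<in> {0..1}" using cell_coord_1 by fastforce
    then show "f (x 1 - 1/2) = (if x 1 - 1/2 \<in> {0..1} then f (x 1 - 1/2) else 0)" by simp
  qed
qed

lemma borel_measurable_cell_embed:
  assumes U: "countable U" and g: "\<And>r. r \<in> U \<Longrightarrow> g r \<in> borel_measurable L01"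
  shows "cell_embed U g \<in> borel_measurable mu"
proof (rule measurable_piecewise_restrict[of "insert (- (\<Union>r\<in>U. cell r)) (cell ` U)"])
  show "countable (insert (- (\<Union>r\<in>U. cell r)) (cell ` U))" using U by simp
  show "space mu \<subseteq> \<Union> (insert (- (\<Union>r\<in>U. cell r)) (cell ` U))" by blast
  have "(\<Union>r\<in>U. cell r) \<in> sets mu" using U by (intro sets.countable_UN'') auto
  then have "- (\<Union>r\<in>U. cell r) \<in> sets mu"
    using sets.compl_sets[of "\<Union>r\<in>U. cell r" mu] by (simp add: Compl_eq_Diff_UNIV)
  then show "\<Omega> \<inter> space mu \<in> sets mu" if "\<Omega> \<in> insert (- (\<Union>r\<in>U. cell r)) (cell ` U)" for \<Omega>
    using that by auto
  fix \<Omega> assume "\<Omega> \<in> insert (- (\<Union>r\<in>U. cell r)) (cell ` U)"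
  then consider "\<Omega> = - (\<Union>r\<in>U. cell r)" | r where "r \<in> U" "\<Omega> = cell r" by auto
  then show "cell_embed U g \<in> borel_measurable (restrict_space mu \<Omega>)"
  proof cases
    case 1
    then show ?thesis
      by (subst measurable_cong[where g = "\<lambda>_. 0"]) (auto simp: space_restrict_space cell_embed_off_cells)
  next
    case 2
    obtain h where h: "h \<in> borel_measurable mu" "\<forall>x \<in> cell r. g r (x 1 - 1/2) = h x"
      using borel_measurable_cell_L01[OF g[OF \<open>r \<in> U\<close>]] by blast
    then show ?thesis using 2
      by (subst measurable_cong[where g = h])
         (auto simp: space_restrict_space cell_embed_on_cell intro: measurable_restrict_space1)
  qed
qed

lemma nn_integral_cell_embed_powr:
  assumes U: "countable U" and g: "\<And>r. r \<in> U \<Longrightarrow> g r \<in> borel_measurable L01"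
  shows "(\<integral>\<^sup>+ x. ennreal (\<bar>cell_embed U g x\<bar> powr p) \<partial>mu) =
    (\<integral>\<^sup>+ r. (\<integral>\<^sup>+ t. ennreal (\<bar>g r t\<bar> powr p) \<partial>L01) \<partial>count_space U)"
proof -
  define F where "F r x = indicator (cell r) x * ennreal (\<bar>g r (x 1 - 1/2)\<bar> powr p)" for r x
  have F_meas: "F r \<in> borel_measurable mu" if r: "r \<in> U" for r
  proof -
    obtain h where h: "h \<in> borel_measurable mu" "\<forall>x \<in> cell r. g r (x 1 - 1/2) = h x"
      using borel_measurable_cell_L01[OF g[OF r]] by blast
    have "F r = (\<lambda>x. indicator (cell r) x * ennreal (\<bar>h x\<bar> powr p))"
      using h(2) by (auto simp: F_def indicator_def)
    then show ?thesis using h(1) by simp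
  qed
  have "ennreal (\<bar>cell_embed U g x\<bar> powr p) = (\<integral>\<^sup>+ r. F r x \<partial>count_space U)" for x
  proof (cases "\<exists>s\<in>U. x \<in> cell s")
    case True
    then obtain s where s: "s \<in> U" "x \<in> cell s" by blast
    then have "(\<integral>\<^sup>+ r. F r x \<partial>count_space U) = (\<Sum>r\<in>{s}. F r x)"
      using cell_disjoint by (intro nn_integral_count_space') (auto simp: F_def indicator_def)
    then show ?thesis using s by (simp add: F_def cell_embed_on_cell)
  next
    case False
    then show ?thesis
      by (simp add: cell_embed_off_cells F_def nn_integral_0_iff_AE AE_count_space indicator_def)
  qed
  then have "(\<integral>\<^sup>+ x. ennreal (\<bar>cell_embed U g x\<bar> powr p) \<partial>mu) =
      (\<integral>\<^sup>+ r. (\<integral>\<^sup>+ x. F r x \<partial>mu) \<partial>count_space U)"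
    using F_meas by (simp add: nn_integral_count_space_nn_integral[OF U])
  also have "\<dots> = (\<integral>\<^sup>+ r. (\<integral>\<^sup>+ t. ennreal (\<bar>g r t\<bar> powr p) \<partial>L01) \<partial>count_space U)"
    unfolding F_def using g by (intro nn_integral_cong nn_integral_cell_L01) auto
  finally show ?thesis .
qed

lemma AE_cell_embed_cube:
  assumes "countable U"
  shows "AE x in mu. x \<in> cube a \<longrightarrow> cell_embed U g x = 0"
proof (rule AE_I')
  have "cube a \<in> sets mu" unfolding cube_def by (rule rect_sets_mu) simp
  then show "(\<Union>r\<in>U. cube a \<inter> cell r) \<in> null_sets mu"
    using assms emeasure_cube_Int_cell by (intro null_sets_UN') (auto simp: null_sets_def)
  show "{x \<in> space mu. \<not> (x \<in> cube a \<longrightarrow> cell_embed U g x = 0)} \<subseteq> (\<Union>r\<in>U. cube a \<inter> cell r)"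
    using cell_embed_off_cells by blast
qed

lemma AE_cell_embed_cong:
  assumes U: "countable U" and ae: "\<And>r. r \<in> U \<Longrightarrow> AE t in L01. g r t = h r t"
  shows "AE x in mu. cell_embed U g x = cell_embed U h x"
proof -
  have "AE x in mu. \<forall>r\<in>U. x \<in> cell r \<longrightarrow> g r (x 1 - 1/2) = h r (x 1 - 1/2)"
    using U ae by (intro AE_ball_countable' AE_cell_of_AE_L01)
  then show ?thesis
  proof (rule eventually_mono)
    fix x assume "\<forall>r\<in>U. x \<in> cell r \<longrightarrow> g r (x 1 - 1/2) = h r (x 1 - 1/2)"
    then show "cell_embed U g x = cell_embed U h x"
      by (cases "\<exists>r\<in>U. x \<in> cell r") (auto simp: cell_embed_on_cell cell_embed_off_cells)
  qed
qed

lemma AE_cell_embed_support: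
  assumes U: "countable U" "ellp_support p g \<subseteq> U"
    and g: "\<And>r. memLp L01 p (g r)" and "0 < p"
  shows "AE x in mu. cell_embed U g x = cell_embed (ellp_support p g) g x"
proof -
  have "AE t in L01. g r t = (if r \<in> ellp_support p g then g r else (\<lambda>_. 0)) t" for r
  proof (cases "r \<in> ellp_support p g")
    case False
    then show ?thesis
      using AE_zero_if_Lp_norm_eq_0[OF g \<open>0 < p\<close>] by (simp add: ellp_support_def)
  qed simp
  then show ?thesis
    unfolding cell_embed_subset[OF U(2)] by (intro AE_cell_embed_cong[OF U(1)])
qed

text \<open>A component of \<open>g \<in> ellp p\<close> with zero norm still may be nonzero on a null set,
  and there may be continuum many such components; embedding only the countably many
  components of positive norm keeps the embedding measurable.\<close>

definition ellp_embed :: "real \<Rightarrow> (real \<Rightarrow> real \<Rightarrow> real) \<Rightarrow> (nat \<Rightarrow> real) \<Rightarrow> real" where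
  "ellp_embed p g = cell_embed (ellp_support p g) g"

lemma
  assumes g: "g \<in> ellp p" and "0 < p"
  shows ellp_embed_in_Bp: "ellp_embed p g \<in> Bp p"
    and Lp_norm_ellp_embed: "Lp_norm mu p (ellp_embed p g) = ellp_norm p g"
proof -
  have U: "countable (ellp_support p g)" by (rule countable_ellp_support[OF g \<open>0 < p\<close>])
  have mem: "memLp L01 p (g r)" for r using g by (simp add: ellp_def)
  then have meas: "g r \<in> borel_measurable L01" for r by (simp add: memLp_def)
  have "(\<integral>\<^sup>+ x. ennreal (\<bar>ellp_embed p g x\<bar> powr p) \<partial>mu) =
      (\<integral>\<^sup>+ r. ennreal (Lp_norm L01 p (g r) powr p) \<partial>count_space (ellp_support p g))"
    unfolding ellp_embed_def nn_integral_cell_embed_powr[OF U meas]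
    by (intro nn_integral_cong) (simp add: ennreal_Lp_norm_powr[OF mem \<open>0 < p\<close>])
  also have "\<dots> = (\<integral>\<^sup>+ r. ennreal (Lp_norm L01 p (g r) powr p) \<partial>count_space UNIV)"
    by (intro nn_integral_count_space_eq) (auto simp: ellp_support_eq[OF \<open>0 < p\<close>])
  finally have eq: "(\<integral>\<^sup>+ x. ennreal (\<bar>ellp_embed p g x\<bar> powr p) \<partial>mu) =
      (\<integral>\<^sup>+ r. ennreal (Lp_norm L01 p (g r) powr p) \<partial>count_space UNIV)" .
  have "memLp mu p (ellp_embed p g)"
    using g eq borel_measurable_cell_embed[OF U meas] by (simp add: memLp_def ellp_def ellp_embed_def)
  then show "ellp_embed p g \<in> Bp p"
    using AE_cell_embed_cube[OF U] by (simp add: Bp_iff ellp_embed_def)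
  show "Lp_norm mu p (ellp_embed p g) = ellp_norm p g"
    unfolding Lp_norm_def ellp_norm_def eq ..
qed

lemma AE_ellp_embed_cong:
  assumes U: "countable (ellp_support p g)" and ae: "\<And>r. AE t in L01. g r t = h r t"
  shows "AE x in mu. ellp_embed p g x = ellp_embed p h x"
proof -
  have "ellp_support p h = ellp_support p g"
    using Lp_norm_cong_AE[OF ae] by (simp add: ellp_support_def)
  then show ?thesis
    unfolding ellp_embed_def using AE_cell_embed_cong[OF U ae] by simp
qed

lemma AE_ellp_embed_lincomb:
  assumes g: "g \<in> ellp p" and h: "h \<in> ellp p" and "0 < p"
  shows "AE x in mu. ellp_embed p (\<lambda>k t. a * g k t + b * h k t) x =
    a * ellp_embed p g x + b * ellp_embed p h x"
proof -
  define c where "c = (\<lambda>k t. a * g k t + b * h k t)"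
  define U where "U = ellp_support p g \<union> ellp_support p h"
  have U: "countable U"
    using countable_ellp_support[OF g \<open>0 < p\<close>] countable_ellp_support[OF h \<open>0 < p\<close>] by (simp add: U_def)
  have mem_g: "memLp L01 p (g r)" and mem_h: "memLp L01 p (h r)" for r
    using g h by (simp_all add: ellp_def)
  then have mem_c: "memLp L01 p (c r)" for r
    unfolding c_def using \<open>0 < p\<close> by (intro memLp_lincomb)
  have "Lp_norm L01 p (c r) = 0" if "r \<notin> U" for r
  proof -
    have "AE t in L01. g r t = 0" "AE t in L01. h r t = 0"
      using that AE_zero_if_Lp_norm_eq_0[OF mem_g \<open>0 < p\<close>] AE_zero_if_Lp_norm_eq_0[OF mem_h \<open>0 < p\<close>]
      by (auto simp: U_def ellp_support_def)
    then have "AE t in L01. c r t = 0" unfolding c_def by eventually_elim simp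
    then show ?thesis by (rule Lp_norm_eq_0_if_AE_zero)
  qed
  then have "ellp_support p c \<subseteq> U" by (auto simp: ellp_support_def)
  then have "AE x in mu. cell_embed U c x = ellp_embed p c x"
    unfolding ellp_embed_def using U mem_c \<open>0 < p\<close> by (intro AE_cell_embed_support)
  moreover have "AE x in mu. cell_embed U g x = ellp_embed p g x"
    unfolding ellp_embed_def using U mem_g \<open>0 < p\<close> by (intro AE_cell_embed_support) (auto simp: U_def)
  moreover have "AE x in mu. cell_embed U h x = ellp_embed p h x"
    unfolding ellp_embed_def using U mem_h \<open>0 < p\<close> by (intro AE_cell_embed_support) (auto simp: U_def)
  ultimately show ?thesis
    by eventually_elim (simp add: c_def cell_embed_lincomb)
qed

section \<open>Projecting \<open>B^p\<close> onto the embedded copy\<close>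

definition coord_algebra :: "nat \<Rightarrow> (nat \<Rightarrow> real) measure" where
  "coord_algebra j = vimage_algebra UNIV (\<lambda>x. x j) borel"

lemma space_coord_algebra [simp]: "space (coord_algebra j) = UNIV"
  by (simp add: coord_algebra_def)

lemma measurable_coord_algebra [measurable]: "(\<lambda>x. x j) \<in> borel_measurable (coord_algebra j)"
  unfolding coord_algebra_def by (rule measurable_vimage_algebra1) simp

lemma coord_algebra_factor:
  fixes h :: "(nat \<Rightarrow> real) \<Rightarrow> 'c::t1_space"
  assumes "h \<in> borel_measurable (coord_algebra j)" "x j = y j"
  shows "h x = h y"
  using vimage_algebra_measurable_factor[where X = UNIV and f = "\<lambda>x. x j" and M = borel] assms
  unfolding coord_algebra_def by simp

lemma measurable_into_coord_algebra:
  "(\<lambda>t. (\<lambda>i. if i = j then t else 0)) \<in> measurable borel (coord_algebra j)"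
  unfolding coord_algebra_def by (rule measurable_vimage_algebra2) simp_all

lemma sigma_finite_subalgebra_cell_measure:
  "sigma_finite_subalgebra (cell_measure r) (coord_algebra j)"
proof -
  interpret prob_space "cell_measure r" by (rule prob_space_cell_measure)
  have "sets (coord_algebra j) \<subseteq> sets mu"
  proof
    fix X assume "X \<in> sets (coord_algebra j)"
    then obtain A where "A \<in> sets borel" "X = (\<lambda>x. x j) -` A \<inter> UNIV"
      unfolding coord_algebra_def by (auto simp: sets_vimage_algebra2)
    then show "X \<in> sets mu" using coord_slab_sets_mu[of A j] by (simp add: vimage_def)
  qed
  then have "finite_measure_subalgebra (cell_measure r) (coord_algebra j)"
    by unfold_locales (simp add: subalgebra_def)
  then show ?thesis by (rule finite_measure_subalgebra_is_sigma_finite)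
qed

text \<open>The conditional expectation given \<open>x 1\<close> is a function of \<open>x 1\<close> alone, so it can be
  read off at any point whose coordinate \<open>1\<close> equals \<open>t + 1/2\<close>.\<close>

definition cell_profile :: "((nat \<Rightarrow> real) \<Rightarrow> real) \<Rightarrow> real \<Rightarrow> real \<Rightarrow> real" where
  "cell_profile f r t =
    real_cond_exp (cell_measure r) (coord_algebra 1) f (\<lambda>i. if i = 1 then t + 1/2 else 0)"

lemma real_cond_exp_cell_profile:
  "real_cond_exp (cell_measure r) (coord_algebra 1) f x = cell_profile f r (x 1 - 1/2)"
  unfolding cell_profile_def by (rule coord_algebra_factor[OF borel_measurable_cond_exp]) simp

lemma borel_measurable_cell_profile [measurable]: "cell_profile f r \<in> borel_measurable borel"
proof -
  have "(\<lambda>t. (\<lambda>i. if i = 1 then t + 1/2 else 0)) \<in> measurable borel (coord_algebra 1)"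
    using measurable_compose[OF _ measurable_into_coord_algebra, of "\<lambda>t. t + 1/2"] by simp
  moreover have "cell_profile f r =
      real_cond_exp (cell_measure r) (coord_algebra 1) f \<circ> (\<lambda>t. (\<lambda>i. if i = 1 then t + 1/2 else 0))"
    by (auto simp: cell_profile_def)
  ultimately show ?thesis using borel_measurable_cond_exp by (simp add: measurable_comp)
qed

lemma borel_measurable_cell_profile_L01 [measurable]: "cell_profile f r \<in> borel_measurable L01"
  unfolding L01_def by (rule measurable_restrict_space1) simp

lemma
  assumes "f \<in> Bp p"
  shows borel_measurable_cell_measure_Bp: "f \<in> borel_measurable (cell_measure r)"
    and nn_integral_cell_measure_Bp_finite:
      "(\<integral>\<^sup>+ x. ennreal (\<bar>f x\<bar> powr p) \<partial>cell_measure r) < \<infinity>"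
proof -
  have f: "f \<in> borel_measurable mu" "(\<integral>\<^sup>+ x. ennreal (\<bar>f x\<bar> powr p) \<partial>mu) < \<infinity>"
    using assms by (simp_all add: Bp_def memLp_def)
  then show "f \<in> borel_measurable (cell_measure r)" by simp
  have "(\<integral>\<^sup>+ x. ennreal (\<bar>f x\<bar> powr p) \<partial>cell_measure r) \<le> (\<integral>\<^sup>+ x. ennreal (\<bar>f x\<bar> powr p) \<partial>mu)"
    using f(1) by (subst nn_integral_cell_measure) (auto intro!: nn_integral_mono simp: indicator_def)
  then show "(\<integral>\<^sup>+ x. ennreal (\<bar>f x\<bar> powr p) \<partial>cell_measure r) < \<infinity>"
    using f(2) by (rule le_less_trans)
qed

lemma integrable_cell_measure_Bp: "f \<in> Bp p \<Longrightarrow> 1 \<le> p \<Longrightarrow> integrable (cell_measure r) f"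
  using prob_space_cell_measure[THEN prob_space.finite_measure]
  by (intro integrable_if_nn_integral_powr_finite borel_measurable_cell_measure_Bp
      nn_integral_cell_measure_Bp_finite)

lemma nn_integral_cell_profile_le:
  assumes f: "f \<in> Bp p" and p: "1 \<le> p"
  shows "(\<integral>\<^sup>+ t. ennreal (\<bar>cell_profile f r t\<bar> powr p) \<partial>L01) \<le>
    (\<integral>\<^sup>+ x. indicator (cell r) x * ennreal (\<bar>f x\<bar> powr p) \<partial>mu)"
proof -
  let ?E = "real_cond_exp (cell_measure r) (coord_algebra 1) f"
  have E [measurable]: "?E \<in> borel_measurable mu"
    using borel_measurable_cond_exp2[of "cell_measure r" "coord_algebra 1" f] by simp
  have "(\<integral>\<^sup>+ t. ennreal (\<bar>cell_profile f r t\<bar> powr p) \<partial>L01) =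
      (\<integral>\<^sup>+ x. indicator (cell r) x * ennreal (\<bar>cell_profile f r (x 1 - 1/2)\<bar> powr p) \<partial>mu)"
    by (rule nn_integral_cell_L01[symmetric]) measurable
  also have "\<dots> = (\<integral>\<^sup>+ x. indicator (cell r) x * ennreal (\<bar>?E x\<bar> powr p) \<partial>mu)"
    by (simp only: real_cond_exp_cell_profile)
  also have "\<dots> = (\<integral>\<^sup>+ x. ennreal (\<bar>?E x\<bar> powr p) \<partial>cell_measure r)"
    by (rule nn_integral_cell_measure[symmetric]) measurable
  also have "\<dots> \<le> (\<integral>\<^sup>+ x. ennreal (\<bar>f x\<bar> powr p) \<partial>cell_measure r)"
    using sigma_finite_subalgebra_cell_measure prob_space_cell_measure[THEN prob_space.finite_measure] p
      borel_measurable_cell_measure_Bp[OF f] nn_integral_cell_measure_Bp_finite[OF f]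
    by (rule nn_integral_real_cond_exp_powr_le)
  also have "\<dots> = (\<integral>\<^sup>+ x. indicator (cell r) x * ennreal (\<bar>f x\<bar> powr p) \<partial>mu)"
  proof (rule nn_integral_cell_measure)
    have [measurable]: "f \<in> borel_measurable mu" using f by (simp add: Bp_def memLp_def)
    show "(\<lambda>x. ennreal (\<bar>f x\<bar> powr p)) \<in> borel_measurable mu" by measurable
  qed
  finally show ?thesis .
qed

lemma nn_integral_count_space_cells_le:
  assumes F [measurable]: "F \<in> borel_measurable mu" and I: "countable I"
  shows "(\<integral>\<^sup>+ r. (\<integral>\<^sup>+ x. indicator (cell r) x * F x \<partial>mu) \<partial>count_space I) \<le> (\<integral>\<^sup>+ x. F x \<partial>mu)"
proof -
  have "(\<integral>\<^sup>+ r. (\<integral>\<^sup>+ x. indicator (cell r) x * F x \<partial>mu) \<partial>count_space I) =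
      (\<integral>\<^sup>+ x. (\<integral>\<^sup>+ r. indicator (cell r) x * F x \<partial>count_space I) \<partial>mu)"
    by (rule nn_integral_count_space_nn_integral[symmetric, OF I]) simp
  also have "\<dots> \<le> (\<integral>\<^sup>+ x. F x \<partial>mu)"
  proof (rule nn_integral_mono)
    fix x
    have "(\<integral>\<^sup>+ r. indicator (cell r) x * F x \<partial>count_space I) =
        (\<integral>\<^sup>+ r. of_bool (x \<in> cell r) \<partial>count_space I) * F x"
      by (subst nn_integral_multc[symmetric]) (auto simp: indicator_def)
    also have "(\<integral>\<^sup>+ r. of_bool (x \<in> cell r) \<partial>count_space I) = of_bool (\<exists>r\<in>I. x \<in> cell r)"
      using cell_disjoint by (intro of_bool_Bex_eq_nn_integral[symmetric]) blast
    finally show "(\<integral>\<^sup>+ r. indicator (cell r) x * F x \<partial>count_space I) \<le> F x"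
      by simp
  qed
  finally show ?thesis .
qed

lemma
  assumes f: "f \<in> Bp p" and p: "1 \<le> p"
  shows cell_profile_in_ellp: "cell_profile f \<in> ellp p"
    and ellp_norm_cell_profile_le: "ellp_norm p (cell_profile f) \<le> Lp_norm mu p f"
proof -
  have f_meas [measurable]: "f \<in> borel_measurable mu"
    and C: "(\<integral>\<^sup>+ x. ennreal (\<bar>f x\<bar> powr p) \<partial>mu) < \<infinity>"
    using f by (simp_all add: Bp_def memLp_def)
  define J where "J r = (\<integral>\<^sup>+ x. indicator (cell r) x * ennreal (\<bar>f x\<bar> powr p) \<partial>mu)" for r
  have J_le: "J r \<le> (\<integral>\<^sup>+ x. ennreal (\<bar>f x\<bar> powr p) \<partial>mu)" for r
    unfolding J_def by (intro nn_integral_mono) (auto simp: indicator_def)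
  have mem: "memLp L01 p (cell_profile f r)" for r
    using nn_integral_cell_profile_le[OF f p, of r] J_le[of r] C
    by (auto simp: memLp_def J_def intro: le_less_trans)
  have le_J: "ennreal (Lp_norm L01 p (cell_profile f r) powr p) \<le> J r" for r
    using nn_integral_cell_profile_le[OF f p] p by (simp add: ennreal_Lp_norm_powr[OF mem] J_def)
  have "(\<integral>\<^sup>+ r. ennreal (Lp_norm L01 p (cell_profile f r) powr p) \<partial>count_space I) \<le>
      (\<integral>\<^sup>+ x. ennreal (\<bar>f x\<bar> powr p) \<partial>mu)" if "countable I" for I
  proof -
    have "(\<integral>\<^sup>+ r. ennreal (Lp_norm L01 p (cell_profile f r) powr p) \<partial>count_space I) \<le>
        (\<integral>\<^sup>+ r. J r \<partial>count_space I)"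
      by (intro nn_integral_mono le_J)
    also have "\<dots> \<le> (\<integral>\<^sup>+ x. ennreal (\<bar>f x\<bar> powr p) \<partial>mu)"
      unfolding J_def by (rule nn_integral_count_space_cells_le[OF _ that]) measurable
    finally show ?thesis .
  qed
  then have sum_le: "(\<integral>\<^sup>+ r. ennreal (Lp_norm L01 p (cell_profile f r) powr p) \<partial>count_space UNIV) \<le>
      (\<integral>\<^sup>+ x. ennreal (\<bar>f x\<bar> powr p) \<partial>mu)"
    using C by (rule nn_integral_count_space_le_if_countable_le)
  show "cell_profile f \<in> ellp p"
    using mem sum_le C by (auto simp: ellp_def intro: le_less_trans)
  have "enn2real (\<integral>\<^sup>+ r. ennreal (Lp_norm L01 p (cell_profile f r) powr p) \<partial>count_space UNIV) \<le>
      enn2real (\<integral>\<^sup>+ x. ennreal (\<bar>f x\<bar> powr p) \<partial>mu)"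
    using sum_le C by (intro enn2real_mono) auto
  then show "ellp_norm p (cell_profile f) \<le> Lp_norm mu p f"
    unfolding ellp_norm_def Lp_norm_def using p by (intro powr_mono2) auto
qed

lemma AE_cell_profile_lincomb:
  assumes f: "f \<in> Bp p" and f': "f' \<in> Bp p" and p: "1 \<le> p"
  shows "AE t in L01. cell_profile (\<lambda>y. a * f y + b * f' y) r t =
    a * cell_profile f r t + b * cell_profile f' r t"
proof -
  interpret sigma_finite_subalgebra "cell_measure r" "coord_algebra 1"
    by (rule sigma_finite_subalgebra_cell_measure)
  have int: "integrable (cell_measure r) f" "integrable (cell_measure r) f'"
    using f f' p by (simp_all add: integrable_cell_measure_Bp)
  have "AE x in cell_measure r. real_cond_exp (cell_measure r) (coord_algebra 1) (\<lambda>y. a * f y + b * f' y) x =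
      real_cond_exp (cell_measure r) (coord_algebra 1) (\<lambda>y. a * f y) x +
      real_cond_exp (cell_measure r) (coord_algebra 1) (\<lambda>y. b * f' y) x"
    using int by (intro real_cond_exp_add) auto
  moreover have "AE x in cell_measure r.
      real_cond_exp (cell_measure r) (coord_algebra 1) (\<lambda>y. a * f y) x =
      a * real_cond_exp (cell_measure r) (coord_algebra 1) f x"
    using int by (intro real_cond_exp_cmult) auto
  moreover have "AE x in cell_measure r.
      real_cond_exp (cell_measure r) (coord_algebra 1) (\<lambda>y. b * f' y) x =
      b * real_cond_exp (cell_measure r) (coord_algebra 1) f' x"
    using int by (intro real_cond_exp_cmult) auto
  ultimately have "AE x in cell_measure r. cell_profile (\<lambda>y. a * f y + b * f' y) r (x 1 - 1/2) =
      a * cell_profile f r (x 1 - 1/2) + b * cell_profile f' r (x 1 - 1/2)"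
    unfolding real_cond_exp_cell_profile by eventually_elim simp
  then show ?thesis
    unfolding AE_cell_measure by (rule AE_L01_of_AE_cell[rotated]) measurable
qed

lemma AE_cell_profile_eq:
  assumes G [measurable]: "G \<in> borel_measurable borel"
    and f: "integrable (cell_measure r) f" and f_eq: "AE x in cell_measure r. f x = G (x 1 - 1/2)"
  shows "AE t in L01. cell_profile f r t = G t"
proof -
  interpret sigma_finite_subalgebra "cell_measure r" "coord_algebra 1"
    by (rule sigma_finite_subalgebra_cell_measure)
  have [measurable]: "G \<in> borel_measurable L01"
    unfolding L01_def by (rule measurable_restrict_space1) simp
  have "AE x in cell_measure r. real_cond_exp (cell_measure r) (coord_algebra 1) f x =
      real_cond_exp (cell_measure r) (coord_algebra 1) (\<lambda>x. G (x 1 - 1/2)) x"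
    using f_eq f by (intro real_cond_exp_cong) auto
  moreover have "AE x in cell_measure r.
      real_cond_exp (cell_measure r) (coord_algebra 1) (\<lambda>x. G (x 1 - 1/2)) x = G (x 1 - 1/2)"
    using f f_eq by (intro real_cond_exp_F_meas) (auto intro: integrable_cong_AE_imp)
  ultimately have "AE x in cell_measure r. cell_profile f r (x 1 - 1/2) = G (x 1 - 1/2)"
    unfolding real_cond_exp_cell_profile by eventually_elim simp
  then show ?thesis
    unfolding AE_cell_measure by (rule AE_L01_of_AE_cell[rotated]) measurable
qed

lemma AE_cell_profile_ellp_embed:
  assumes g: "g \<in> ellp p" and p: "1 \<le> p"
  shows "AE t in L01. cell_profile (ellp_embed p g) r t = g r t"
proof -
  have mem: "memLp L01 p (g r)" using g by (simp add: ellp_def)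
  define G where "G t = (if r \<in> ellp_support p g \<and> t \<in> {0..1} then g r t else 0)" for t
  have G: "G \<in> borel_measurable borel"
  proof (cases "r \<in> ellp_support p g")
    case True
    then have "G = (\<lambda>t. if t \<in> {0..1} then g r t else 0)" by (auto simp: G_def)
    then show ?thesis
      using borel_measurable_zero_extension[of "g r"] mem by (simp add: memLp_def)
  next
    case False
    then have "G = (\<lambda>_. 0)" by (auto simp: G_def)
    then show ?thesis by simp
  qed
  have "ellp_embed p g x = G (x 1 - 1/2)" if "x \<in> cell r" for x
    using cell_coord_1[OF that] by (simp add: ellp_embed_def cell_embed_on_cell[OF that] G_def)
  then have "AE x in cell_measure r. ellp_embed p g x = G (x 1 - 1/2)"
    unfolding AE_cell_measure by (intro AE_I2) auto
  then have "AE t in L01. cell_profile (ellp_embed p g) r t = G t"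
    using ellp_embed_in_Bp[OF g] p by (intro AE_cell_profile_eq G integrable_cell_measure_Bp) auto
  moreover have "AE t in L01. G t = g r t"
  proof (cases "r \<in> ellp_support p g")
    case False
    then show ?thesis
      using AE_zero_if_Lp_norm_eq_0[OF mem] p by (auto simp: G_def ellp_support_def)
  qed (auto simp: G_def intro: AE_I2)
  ultimately show ?thesis by eventually_elim simp
qed

definition cell_proj :: "real \<Rightarrow> ((nat \<Rightarrow> real) \<Rightarrow> real) \<Rightarrow> (nat \<Rightarrow> real) \<Rightarrow> real" where
  "cell_proj p f = ellp_embed p (cell_profile f)"

lemma
  assumes "f \<in> Bp p" "1 \<le> p"
  shows cell_proj_in_Bp: "cell_proj p f \<in> Bp p"
    and Lp_norm_cell_proj_le: "Lp_norm mu p (cell_proj p f) \<le> Lp_norm mu p f"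
  using assms ellp_embed_in_Bp Lp_norm_ellp_embed cell_profile_in_ellp ellp_norm_cell_profile_le
  by (simp_all add: cell_proj_def)

lemma AE_cell_proj_lincomb:
  assumes f: "f \<in> Bp p" and f': "f' \<in> Bp p" and p: "1 \<le> p"
  shows "AE x in mu. cell_proj p (\<lambda>y. a * f y + b * f' y) x = a * cell_proj p f x + b * cell_proj p f' x"
proof -
  have "(\<lambda>y. a * f y + b * f' y) \<in> Bp p" using f f' p by (intro Bp_lincomb) auto
  then have "AE x in mu. cell_proj p (\<lambda>y. a * f y + b * f' y) x =
      ellp_embed p (\<lambda>r t. a * cell_profile f r t + b * cell_profile f' r t) x"
    unfolding cell_proj_def using f f' p
    by (intro AE_ellp_embed_cong countable_ellp_support cell_profile_in_ellp AE_cell_profile_lincomb)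
       auto
  moreover have "AE x in mu. ellp_embed p (\<lambda>r t. a * cell_profile f r t + b * cell_profile f' r t) x =
      a * cell_proj p f x + b * cell_proj p f' x"
    unfolding cell_proj_def using f f' p by (intro AE_ellp_embed_lincomb cell_profile_in_ellp) auto
  ultimately show ?thesis by eventually_elim simp
qed

lemma AE_cell_proj_ellp_embed:
  assumes g: "g \<in> ellp p" and p: "1 \<le> p"
  shows "AE x in mu. cell_proj p (ellp_embed p g) x = ellp_embed p g x"
  unfolding cell_proj_def using assms
  by (intro AE_ellp_embed_cong countable_ellp_support cell_profile_in_ellp ellp_embed_in_Bp
      AE_cell_profile_ellp_embed) auto

theorem theorem3p6:
  fixes p :: real
  assumes "1 \<le> p"
  shows "\<exists>(T :: (real \<Rightarrow> real \<Rightarrow> real) \<Rightarrow> (nat \<Rightarrow> real) \<Rightarrow> real)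
           (P :: ((nat \<Rightarrow> real) \<Rightarrow> real) \<Rightarrow> (nat \<Rightarrow> real) \<Rightarrow> real) (c :: real).
     (\<forall>g \<in> ellp p. T g \<in> Bp p) \<and>
     (\<forall>g \<in> ellp p. \<forall>h \<in> ellp p. \<forall>a b :: real.
        Lp_norm mu p (\<lambda>x. T (\<lambda>k t. a * g k t + b * h k t) x - (a * T g x + b * T h x)) = 0) \<and>
     (\<forall>g \<in> ellp p. Lp_norm mu p (T g) = ellp_norm p g) \<and>
     (\<forall>f \<in> Bp p. P f \<in> Bp p) \<and>
     (\<forall>f \<in> Bp p. \<forall>f' \<in> Bp p. \<forall>a b :: real.
        Lp_norm mu p (\<lambda>x. P (\<lambda>y. a * f y + b * f' y) x - (a * P f x + b * P f' x)) = 0) \<and>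
     (\<forall>f \<in> Bp p. Lp_norm mu p (P f) \<le> c * Lp_norm mu p f) \<and>
     (\<forall>f \<in> Bp p. \<exists>g \<in> ellp p. Lp_norm mu p (\<lambda>x. P f x - T g x) = 0) \<and>
     (\<forall>g \<in> ellp p. Lp_norm mu p (\<lambda>x. P (T g) x - T g x) = 0)"
proof (intro exI[of _ "ellp_embed p"] exI[of _ "cell_proj p"] exI[of _ 1] conjI ballI allI)
  have p: "0 < p" using assms by simp
  fix g h assume "g \<in> ellp p" "h \<in> ellp p"
  then show "Lp_norm mu p (\<lambda>x. ellp_embed p (\<lambda>k t. a * g k t + b * h k t) x -
      (a * ellp_embed p g x + b * ellp_embed p h x)) = 0" for a b
    using p by (intro Lp_norm_diff_eq_0 AE_ellp_embed_lincomb)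
next
  fix f f' assume "f \<in> Bp p" "f' \<in> Bp p"
  then show "Lp_norm mu p (\<lambda>x. cell_proj p (\<lambda>y. a * f y + b * f' y) x -
      (a * cell_proj p f x + b * cell_proj p f' x)) = 0" for a b
    using assms by (intro Lp_norm_diff_eq_0 AE_cell_proj_lincomb)
next
  fix f assume "f \<in> Bp p"
  then show "\<exists>g \<in> ellp p. Lp_norm mu p (\<lambda>x. cell_proj p f x - ellp_embed p g x) = 0"
    using assms by (intro bexI[of _ "cell_profile f"] cell_profile_in_ellp)
      (simp_all add: cell_proj_def Lp_norm_diff_eq_0)
qed (use assms in \<open>simp_all add: ellp_embed_in_Bp Lp_norm_ellp_embed cell_proj_in_Bp
      Lp_norm_cell_proj_le Lp_norm_diff_eq_0 AE_cell_proj_ellp_embed\<close>)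

end
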